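(* Let $\chi$ be an indecomposable character on $S(2^\infty)$ with GNS triple $(\pi,\mathcal{H},\xi)$. There exists $\alpha\in[0,\infty)\cup\{\infty\}$ such that $tr(P^A)=\mu(A)^\alpha$ for every finite union of cylinders (equivalently, every nice set) $A\subset X$.
   Context: Let $X=\{0,1\}^{\mathbb{N}}$ with product measure $\mu=\nu^{\otimes\infty}$, $\nu(\{0\})=\nu(\{1\})=1/2$; $X_n=\{0,1\}^n$; $S(2^n)$ the group of all bijections of $X_n$, acting on $X$ by $s((x,a))=(s(x),a)$; $S(2^\infty)=\bigcup_n S(2^n)$. A character on a group $G$ is a function $\chi$ with $\chi(g_1g_2)=\chi(g_2g_1)$, $(\chi(g_ig_j^{-1}))_{i,j}$ positive semidefinite for all finite families, and $\chi(e)=1$; indecomposable means not a nontrivial convex combination of two distinct characters. GNS triple: $\pi$ a unitary representation on $\mathcal{H}$, $\xi$ a unit cyclic vector, $\chi(g)=(\pi(g)\xi,\xi)$; $tr(T)=(T\xi,\xi)$. A set $A\subset X$ is nice if $A=C\times X$ for some $k$ and $C\subset X_k$ (sequences whose first $k$ coordinates lie in $C$). For such $A$ and $m>k$, $s^A_m$ fixes $A$ pointwise and flips the $m$-th coordinate of points outside $A$; $P^A$ is the weak operator limit of $\pi(s^A_m)$ as $m\to\infty$. Conventions: $0^0=1$, $x^\infty=0$ for $x\in[0,1)$, $1^\infty=1$. *)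

theory Defs
  imports "HOL-Probability.Probability"
begin

type_synonym point = "nat \<Rightarrow> bool"   (* X = {0,1}^N, coordinates indexed from 0 *)

definition Xn :: "nat \<Rightarrow> bool list set" where
  "Xn n = {xs. length xs = n}"

(* action of a bijection sigma of X_n on X: s((x,a)) = (s(x),a) *)
definition act :: "nat \<Rightarrow> (bool list \<Rightarrow> bool list) \<Rightarrow> point \<Rightarrow> point" where
  "act n \<sigma> x = (\<lambda>i. if i < n then \<sigma> (map x [0..<n]) ! i else x i)"

(* S(2^infinity) = union of S(2^n), realised as a group of maps X -> X under composition *)
definition S2inf :: "(point \<Rightarrow> point) set" where
  "S2inf = {act n \<sigma> | n \<sigma>. bij_betw \<sigma> (Xn n) (Xn n)}"

definition is_character :: "((point \<Rightarrow> point) \<Rightarrow> complex) \<Rightarrow> bool" where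
  "is_character chi \<longleftrightarrow>
     (\<forall>g\<in>S2inf. \<forall>h\<in>S2inf. chi (g \<circ> h) = chi (h \<circ> g)) \<and>
     (\<forall>(n::nat) (g :: nat \<Rightarrow> point \<Rightarrow> point) (c :: nat \<Rightarrow> complex).
        (\<forall>i<n. g i \<in> S2inf) \<longrightarrow>
        (let q = (\<Sum>i<n. \<Sum>j<n. cnj (c i) * c j * chi (g i \<circ> inv (g j)))
         in Im q = 0 \<and> Re q \<ge> 0)) \<and>
     chi id = 1"

definition indecomposable_character :: "((point \<Rightarrow> point) \<Rightarrow> complex) \<Rightarrow> bool" where
  "indecomposable_character chi \<longleftrightarrow> is_character chi \<and>
     \<not> (\<exists>t::real. \<exists>chi1 chi2. 0 < t \<and> t < 1 \<and> is_character chi1 \<and> is_character chi2 \<and>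
           (\<exists>g\<in>S2inf. chi1 g \<noteq> chi2 g) \<and>
           (\<forall>g\<in>S2inf. chi g = of_real t * chi1 g + of_real (1 - t) * chi2 g))"

definition mu :: "point measure" where
  "mu = PiM UNIV (\<lambda>_::nat. measure_pmf (pmf_of_set (UNIV :: bool set)))"

definition nice :: "point set \<Rightarrow> bool" where
  "nice A \<longleftrightarrow> (\<exists>k C. C \<subseteq> Xn k \<and> A = {x. map x [0..<k] \<in> C})"

(* s^A_m: fixes A pointwise, flips coordinate m (0-based) outside A *)
definition sA :: "point set \<Rightarrow> nat \<Rightarrow> point \<Rightarrow> point" where
  "sA A m x = (if x \<in> A then x else x(m := \<not> x m))"

(* x^alpha for x \<in> [0,1], alpha \<in> [0,\<infinity>], with 0^0 = 1, x^\<infinity> = 0 (x<1), 1^\<infinity> = 1 *)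
definition epow :: "real \<Rightarrow> ennreal \<Rightarrow> real" where
  "epow x \<alpha> = (if \<alpha> = \<top> then (if x = 1 then 1 else 0)
               else if \<alpha> = 0 then 1
               else x powr (enn2real \<alpha>))"

end

theory Submission
  imports Defs
begin

text \<open>For a nice set \<open>A = cyl K C\<close> the value \<open>\<chi>(s\<^sup>A\<^sub>m)\<close> is the same for all \<open>m \<ge> K\<close> and, by
  conjugation invariance, depends only on \<open>\<mu>(A) = card C / 2\<^sup>K\<close>; call it \<open>G(\<mu>(A))\<close>.
  Positive definiteness of \<open>\<chi>\<close> on suitable families of flips makes \<open>G\<close> monotone.
  Indecomposability makes it multiplicative on dyadic rationals, \<open>G(pq) = G(p) G(q)\<close>: the flips
  off a cylinder over far-out coordinates form an asymptotically central family of involutions,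
  so they act by a scalar. A monotone multiplicative \<open>G\<close> with \<open>G(1) = 1\<close> is \<open>p \<mapsto> p\<^sup>\<alpha>\<close> with
  \<open>\<alpha> = -log\<^sub>2 G(1/2) \<in> [0,\<infinity>]\<close>; one more positivity inequality forces \<open>G(0) = 1\<close> when \<open>\<alpha> = 0\<close>.\<close>

section \<open>Cylinder sets and their measure\<close>

definition cyl :: "nat \<Rightarrow> bool list set \<Rightarrow> point set" where
  "cyl k C = {x. map x [0..<k] \<in> C}"

lemma finite_Xn [simp]: "finite (Xn n)"
  using finite_lists_length_eq[of "UNIV :: bool set" n] by (simp add: Xn_def)

lemma card_Xn: "card (Xn n) = 2 ^ n"
  using card_lists_length_eq[of "UNIV :: bool set" n] by (simp add: Xn_def)

lemma card_le_card_Xn: "C \<subseteq> Xn k \<Longrightarrow> card C \<le> 2 ^ k"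
  using card_mono[OF finite_Xn, of C] card_Xn by simp

lemma obtain_subset_Xn_with_card:
  assumes "n \<le> 2 ^ k"
  obtains C where "C \<subseteq> Xn k" "card C = n"
  using obtain_subset_with_card_n[of n "Xn k"] assms by (auto simp: card_Xn)

lemma card_append_set:
  assumes "P \<subseteq> Xn a" "Q \<subseteq> Xn b"
  shows "card {xs. length xs = a + b \<and> take a xs \<in> P \<and> drop a xs \<in> Q} = card P * card Q"
proof -
  have "bij_betw (\<lambda>(u, v). u @ v) (P \<times> Q) {xs. length xs = a + b \<and> take a xs \<in> P \<and> drop a xs \<in> Q}"
  proof (rule bij_betw_imageI)
    show "inj_on (\<lambda>(u, v). u @ v) (P \<times> Q)"
    proof (rule inj_onI, clarify)
      fix u v u' v' assume "u \<in> P" "u' \<in> P" "u @ v = u' @ v'"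
      moreover have "length u = length u'" using assms \<open>u \<in> P\<close> \<open>u' \<in> P\<close> by (auto simp: Xn_def)
      ultimately show "u = u' \<and> v = v'" by simp
    qed
    show "(\<lambda>(u, v). u @ v) ` (P \<times> Q) = {xs. length xs = a + b \<and> take a xs \<in> P \<and> drop a xs \<in> Q}"
    proof (rule set_eqI, rule iffI)
      fix xs assume "xs \<in> (\<lambda>(u, v). u @ v) ` (P \<times> Q)"
      then obtain u v where "u \<in> P" "v \<in> Q" "xs = u @ v" by auto
      moreover have "length u = a" "length v = b" using assms \<open>u \<in> P\<close> \<open>v \<in> Q\<close> by (auto simp: Xn_def)
      ultimately show "xs \<in> {xs. length xs = a + b \<and> take a xs \<in> P \<and> drop a xs \<in> Q}" by simp
    next
      fix xs assume "xs \<in> {xs. length xs = a + b \<and> take a xs \<in> P \<and> drop a xs \<in> Q}"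
      then show "xs \<in> (\<lambda>(u, v). u @ v) ` (P \<times> Q)"
        by (intro image_eqI[of _ _ "(take a xs, drop a xs)"]) auto
    qed
  qed
  then have "card (P \<times> Q) = card {xs. length xs = a + b \<and> take a xs \<in> P \<and> drop a xs \<in> Q}"
    by (rule bij_betw_same_card)
  then show ?thesis by (simp add: card_cartesian_product)
qed

lemma prob_space_mu: "prob_space mu"
  unfolding mu_def by (intro prob_space_PiM prob_space_measure_pmf)

lemma point_cylinder_prod_emb:
  "{x. \<forall>i<k. x i = ys ! i} =
     prod_emb UNIV (\<lambda>_. measure_pmf (pmf_of_set UNIV)) {..<k} (Pi\<^sub>E {..<k} (\<lambda>i. {ys ! i}))"
  unfolding prod_emb_def space_PiM by (simp add: vimage_def restrict_PiE_iff Pi_def)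

lemma point_cylinder_sets: "{x. \<forall>i<k. x i = ys ! i} \<in> sets mu"
  unfolding point_cylinder_prod_emb mu_def by (rule sets_PiM_I) auto

lemma measure_mu_point_cylinder: "measure mu {x. \<forall>i<k. x i = ys ! i} = 1 / 2 ^ k"
proof -
  have "emeasure mu {x. \<forall>i<k. x i = ys ! i} =
      (\<Prod>i<k. emeasure (measure_pmf (pmf_of_set (UNIV :: bool set))) {ys ! i})"
    unfolding mu_def point_cylinder_prod_emb
    by (rule emeasure_PiM_emb) (auto intro: prob_space_measure_pmf)
  also have "\<dots> = (\<Prod>i<k. ennreal (1 / 2))"
    by (intro prod.cong refl) (simp add: emeasure_pmf_single)
  also have "\<dots> = ennreal ((1 / 2) ^ k)"
    by (subst prod_ennreal) auto
  finally show ?thesis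
    by (simp add: measure_def power_one_over)
qed

lemma cyl_eq_UN_point_cylinders:
  assumes "C \<subseteq> Xn k"
  shows "cyl k C = (\<Union>ys\<in>C. {x. \<forall>i<k. x i = ys ! i})"
proof (rule set_eqI, rule iffI)
  fix x assume "x \<in> cyl k C"
  then have "map x [0..<k] \<in> C" by (simp add: cyl_def)
  then show "x \<in> (\<Union>ys\<in>C. {x. \<forall>i<k. x i = ys ! i})" by force
next
  fix x assume "x \<in> (\<Union>ys\<in>C. {x. \<forall>i<k. x i = ys ! i})"
  then obtain ys where ys: "ys \<in> C" "\<forall>i<k. x i = ys ! i" by blast
  with assms have "map x [0..<k] = ys" by (intro nth_equalityI) (auto simp: Xn_def)
  with ys(1) show "x \<in> cyl k C" by (simp add: cyl_def)
qed

lemma measure_mu_cyl: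
  assumes C: "C \<subseteq> Xn k"
  shows "measure mu (cyl k C) = card C / 2 ^ k"
proof -
  have disj: "disjoint_family_on (\<lambda>ys. {x. \<forall>i<k. x i = ys ! i}) C"
    unfolding disjoint_family_on_def
  proof (intro ballI impI)
    fix ys zs assume "ys \<in> C" "zs \<in> C" "ys \<noteq> zs"
    moreover from C \<open>ys \<in> C\<close> \<open>zs \<in> C\<close> have "length ys = k" "length zs = k"
      by (auto simp: Xn_def)
    ultimately show "{x. \<forall>i<k. x i = ys ! i} \<inter> {x. \<forall>i<k. x i = zs ! i} = {}"
      by (auto intro: nth_equalityI)
  qed
  have "measure mu (cyl k C) = (\<Sum>ys\<in>C. measure mu {x. \<forall>i<k. x i = ys ! i})"
    unfolding cyl_eq_UN_point_cylinders[OF C]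
  proof (rule measure_finite_Union[OF finite_subset[OF C finite_Xn] _ disj])
    show "(\<lambda>ys. {x. \<forall>i<k. x i = ys ! i}) ` C \<subseteq> sets mu"
      using point_cylinder_sets by blast
    show "emeasure mu {x. \<forall>i<k. x i = ys ! i} \<noteq> \<infinity>" for ys
      using finite_measure.emeasure_finite[OF prob_space.finite_measure[OF prob_space_mu]] by simp
  qed
  then show ?thesis
    by (simp add: measure_mu_point_cylinder)
qed

section \<open>The subgroups \<open>S(2^n)\<close>\<close>

text \<open>The image of \<open>S(2\<^sup>n)\<close> under \<open>act n\<close> (see \<open>S2inf_eq_UN_S2\<close>), described intrinsically.\<close>

definition S2 :: "nat \<Rightarrow> (point \<Rightarrow> point) set" where
  "S2 n = {f. bij f \<and> (\<forall>x i. n \<le> i \<longrightarrow> f x i = x i) \<and>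
                (\<forall>x y. (\<forall>i<n. x i = y i) \<longrightarrow> (\<forall>i<n. f x i = f y i))}"

lemma S2I:
  assumes "bij f" "\<And>x i. n \<le> i \<Longrightarrow> f x i = x i"
    and "\<And>x y i. (\<forall>i<n. x i = y i) \<Longrightarrow> i < n \<Longrightarrow> f x i = f y i"
  shows "f \<in> S2 n"
  using assms by (auto simp: S2_def)

lemma S2_bij: "f \<in> S2 n \<Longrightarrow> bij f"
  by (simp add: S2_def)

lemma S2_fixes_high: "f \<in> S2 n \<Longrightarrow> n \<le> i \<Longrightarrow> f x i = x i"
  by (simp add: S2_def)

lemma S2_agree_below: "f \<in> S2 n \<Longrightarrow> (\<forall>i<n. x i = y i) \<Longrightarrow> i < n \<Longrightarrow> f x i = f y i"
  by (simp add: S2_def)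

lemma S2_fun_upd_high:
  assumes "f \<in> S2 n" "n \<le> i"
  shows "f (x(i := v)) = (f x)(i := v)"
proof
  fix j
  show "f (x(i := v)) j = ((f x)(i := v)) j"
  proof (cases "j < n")
    case True
    then have "f (x(i := v)) j = f x j"
      using assms by (intro S2_agree_below) auto
    with True assms(2) show ?thesis by simp
  next
    case False
    then show ?thesis by (simp add: S2_fixes_high[OF assms(1)])
  qed
qed

lemma S2_mono:
  assumes f: "f \<in> S2 n" and "n \<le> m"
  shows "f \<in> S2 m"
proof (rule S2I)
  show "f x i = f y i" if "\<forall>i<m. x i = y i" "i < m" for x y i
  proof (cases "i < n")
    case True
    with that \<open>n \<le> m\<close> show ?thesis by (intro S2_agree_below[OF f]) auto
  qed (use that S2_fixes_high[OF f] in auto)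
qed (use assms S2_bij S2_fixes_high in auto)

lemma id_S2 [simp]: "id \<in> S2 n"
  by (simp add: S2_def)

lemma comp_S2:
  assumes f: "f \<in> S2 n" and g: "g \<in> S2 n"
  shows "f \<circ> g \<in> S2 n"
proof (rule S2I)
  show "(f \<circ> g) x i = (f \<circ> g) y i" if "\<forall>i<n. x i = y i" "i < n" for x y i
    using that S2_agree_below[OF g] by (auto intro!: S2_agree_below[OF f])
next
  show "bij (f \<circ> g)" using bij_comp[OF S2_bij[OF g] S2_bij[OF f]] .
  show "(f \<circ> g) x i = x i" if "n \<le> i" for x i
    using that by (simp add: S2_fixes_high[OF f] S2_fixes_high[OF g])
qed

lemma inv_S2:
  assumes f: "f \<in> S2 n"
  shows "inv f \<in> S2 n"
proof (rule S2I)
  have bf: "bij f" using f by (rule S2_bij)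
  then have f_inv: "f (inv f x) = x" for x by (simp add: bij_is_surj surj_f_inv_f)
  show "bij (inv f)" using bf by (rule bij_imp_bij_inv)
  show "inv f x i = x i" if "n \<le> i" for x i
    using S2_fixes_high[OF f that, of "inv f x"] f_inv by simp
  show "inv f x i = inv f y i" if xy: "\<forall>i<n. x i = y i" and "i < n" for x y i
  proof -
    \<comment> \<open>splice the low part of \<open>inv f x\<close> with the high part of \<open>y\<close>; \<open>f\<close> maps it to \<open>y\<close>\<close>
    define z where "z = (\<lambda>j. if j < n then inv f x j else y j)"
    have "f z = y"
    proof
      fix j show "f z j = y j"
      proof (cases "j < n")
        case True
        then have "f z j = f (inv f x) j" by (intro S2_agree_below[OF f]) (simp add: z_def)
        with f_inv xy True show ?thesis by simp
      qed (use S2_fixes_high[OF f] in \<open>simp add: z_def\<close>)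
    qed
    then have "z = inv f y" using bf by (metis bij_def inv_f_f)
    moreover have "z i = inv f x i" using \<open>i < n\<close> by (simp add: z_def)
    ultimately show ?thesis by simp
  qed
qed

lemma map_act:
  assumes "length (\<sigma> (map x [0..<n])) = n"
  shows "map (act n \<sigma> x) [0..<n] = \<sigma> (map x [0..<n])"
  using assms by (intro nth_equalityI) (auto simp: act_def)

lemma act_comp_act_inv:
  assumes \<sigma>: "bij_betw \<sigma> (Xn n) (Xn n)" and \<tau>: "\<And>ys. ys \<in> Xn n \<Longrightarrow> \<sigma> (\<tau> ys) = ys"
    and \<tau>_Xn: "\<And>ys. ys \<in> Xn n \<Longrightarrow> \<tau> ys \<in> Xn n"
  shows "act n \<sigma> \<circ> act n \<tau> = id"
proof
  fix x
  have "map x [0..<n] \<in> Xn n" by (simp add: Xn_def)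
  then have "map (act n \<tau> x) [0..<n] = \<tau> (map x [0..<n])"
    using \<tau>_Xn by (intro map_act) (simp add: Xn_def)
  with \<tau>[of "map x [0..<n]"] show "(act n \<sigma> \<circ> act n \<tau>) x = id x"
    by (auto simp: act_def Xn_def fun_eq_iff)
qed

lemma act_inv_into:
  assumes b: "bij_betw \<sigma> (Xn n) (Xn n)"
  shows "act n \<sigma> \<circ> act n (inv_into (Xn n) \<sigma>) = id"
    and "act n (inv_into (Xn n) \<sigma>) \<circ> act n \<sigma> = id"
proof -
  have b': "bij_betw (inv_into (Xn n) \<sigma>) (Xn n) (Xn n)" by (rule bij_betw_inv_into[OF b])
  show "act n \<sigma> \<circ> act n (inv_into (Xn n) \<sigma>) = id"
    using b b' by (intro act_comp_act_inv) (auto simp: bij_betw_inv_into_right bij_betwE)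
  show "act n (inv_into (Xn n) \<sigma>) \<circ> act n \<sigma> = id"
    using b b' by (intro act_comp_act_inv) (auto simp: bij_betw_inv_into_left bij_betwE)
qed

lemma act_S2:
  assumes b: "bij_betw \<sigma> (Xn n) (Xn n)"
  shows "act n \<sigma> \<in> S2 n"
proof (rule S2I)
  show "bij (act n \<sigma>)"
    using act_inv_into[OF b] by (intro o_bij)
  show "act n \<sigma> x i = x i" if "n \<le> i" for x i using that by (simp add: act_def)
  show "act n \<sigma> x i = act n \<sigma> y i" if "\<forall>i<n. x i = y i" "i < n" for x y i
  proof -
    from that(1) have e: "map x [0..<n] = map y [0..<n]" by simp
    from that(2) show ?thesis unfolding act_def e by simp
  qed
qed

lemma S2_act:
  assumes f: "f \<in> S2 n"
  obtains \<sigma> where "bij_betw \<sigma> (Xn n) (Xn n)" "f = act n \<sigma>"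
proof
  define ext :: "bool list \<Rightarrow> point" where "ext xs i = (i < length xs \<and> xs ! i)" for xs i
  define \<sigma> where "\<sigma> xs = map (f (ext xs)) [0..<n]" for xs
  show "f = act n \<sigma>"
  proof (intro ext)
    fix x i
    show "f x i = act n \<sigma> x i"
    proof (cases "i < n")
      case True
      then have "f (ext (map x [0..<n])) i = f x i"
        by (intro S2_agree_below[OF f]) (auto simp: ext_def)
      with True show ?thesis by (simp add: act_def \<sigma>_def)
    qed (simp add: act_def S2_fixes_high[OF f])
  qed
  have "inj_on \<sigma> (Xn n)"
  proof (rule inj_onI)
    fix xs ys assume xs: "xs \<in> Xn n" and ys: "ys \<in> Xn n" and e: "\<sigma> xs = \<sigma> ys"
    have "f (ext xs) = f (ext ys)"
    proof
      fix i
      show "f (ext xs) i = f (ext ys) i"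
      proof (cases "i < n")
        case True
        then show ?thesis using arg_cong[OF e, of "\<lambda>zs. zs ! i"] by (simp add: \<sigma>_def)
      qed (use xs ys in \<open>simp add: S2_fixes_high[OF f] ext_def Xn_def\<close>)
    qed
    then have "ext xs = ext ys" using S2_bij[OF f] by (simp add: bij_def inj_eq)
    with xs ys show "xs = ys"
      by (intro nth_equalityI) (auto simp: Xn_def ext_def fun_eq_iff)
  qed
  moreover have "\<sigma> ` Xn n \<subseteq> Xn n" by (auto simp: \<sigma>_def Xn_def)
  ultimately show "bij_betw \<sigma> (Xn n) (Xn n)"
    by (simp add: bij_betw_def endo_inj_surj)
qed

lemma S2inf_eq_UN_S2: "S2inf = (\<Union>n. S2 n)"
  unfolding S2inf_def by (auto intro: act_S2 elim!: S2_act)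

lemma S2_S2inf: "f \<in> S2 n \<Longrightarrow> f \<in> S2inf"
  unfolding S2inf_eq_UN_S2 by blast

lemma S2inf_obtain_S2:
  assumes "f \<in> S2inf"
  obtains n where "f \<in> S2 n"
  using assms unfolding S2inf_eq_UN_S2 by blast

lemma S2inf_finite_family_S2:
  fixes g :: "nat \<Rightarrow> point \<Rightarrow> point"
  assumes "\<forall>i<N. g i \<in> S2inf"
  shows "\<exists>M. \<forall>i<N. g i \<in> S2 M"
  using assms
proof (induction N)
  case (Suc N)
  then obtain M where M: "\<forall>i<N. g i \<in> S2 M" by auto
  obtain m where "g N \<in> S2 m" using Suc.prems S2inf_obtain_S2 by blast
  with M have "\<forall>i<Suc N. g i \<in> S2 (max M m)"
    by (auto simp: less_Suc_eq intro: S2_mono)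
  then show ?case by blast
qed simp

definition positive_definite :: "((point \<Rightarrow> point) \<Rightarrow> complex) \<Rightarrow> bool" where
  "positive_definite psi \<longleftrightarrow>
     (\<forall>(n::nat) (g :: nat \<Rightarrow> point \<Rightarrow> point) (c :: nat \<Rightarrow> complex). (\<forall>i<n. g i \<in> S2inf) \<longrightarrow>
        (let q = (\<Sum>i<n. \<Sum>j<n. cnj (c i) * c j * psi (g i \<circ> inv (g j)))
         in Im q = 0 \<and> Re q \<ge> 0))"

lemma is_character_iff:
  "is_character psi \<longleftrightarrow>
     (\<forall>g\<in>S2inf. \<forall>h\<in>S2inf. psi (g \<circ> h) = psi (h \<circ> g)) \<and> positive_definite psi \<and> psi id = 1"
  by (simp add: is_character_def positive_definite_def)

lemma positive_definiteD:
  fixes g :: "nat \<Rightarrow> point \<Rightarrow> point"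
  assumes "positive_definite psi" "\<forall>i<n. g i \<in> S2inf"
  shows "Im (\<Sum>i<n. \<Sum>j<n. cnj (c i) * c j * psi (g i \<circ> inv (g j))) = 0"
    and "Re (\<Sum>i<n. \<Sum>j<n. cnj (c i) * c j * psi (g i \<circ> inv (g j))) \<ge> 0"
  using assms by (simp_all add: positive_definite_def Let_def)

lemma positive_definite_scale:
  assumes "positive_definite psi" "0 < s"
  shows "positive_definite (\<lambda>g. complex_of_real s * psi g)"
proof -
  have "(\<Sum>i<n. \<Sum>j<n. cnj (c i) * c j * (complex_of_real s * psi (g i \<circ> inv (g j)))) =
      complex_of_real s * (\<Sum>i<n. \<Sum>j<n. cnj (c i) * c j * psi (g i \<circ> inv (g j)))"
    for n and g :: "nat \<Rightarrow> point \<Rightarrow> point" and c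
    by (simp add: sum_distrib_left algebra_simps)
  with assms show ?thesis
    by (auto simp: positive_definite_def Let_def)
qed

lemma sum_lessThan_2_2:
  fixes f :: "nat \<Rightarrow> nat \<Rightarrow> complex"
  shows "(\<Sum>i<2. \<Sum>j<2. f i j) = f 0 0 + f 0 1 + f 1 0 + f 1 1"
  by (simp add: numeral_2_eq_2)

lemma inv_involution: "f \<circ> f = id \<Longrightarrow> inv f = f"
  by (rule inv_unique_comp) auto

lemma bij_comp_inv: "bij g \<Longrightarrow> g \<circ> inv g = id"
  using bij_is_surj surj_iff by blast

lemma positive_definite_vanishes:
  assumes p: "positive_definite psi" and z: "psi id = 0" and g: "g \<in> S2inf"
  shows "psi g = 0"
proof -
  \<comment> \<open>the coefficients \<open>(1, \<plusminus>1)\<close> and \<open>(1, \<plusminus>\<i>)\<close> on \<open>{id, g}\<close> force \<open>\<psi> g \<plusminus> \<psi> (inv g) = 0\<close>\<close>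
  have bg: "bij g" using g by (auto elim: S2inf_obtain_S2 intro: S2_bij)
  define h where "h = (\<lambda>i::nat. if i = 0 then id else g)"
  have hS: "\<forall>i<2. h i \<in> S2inf" using g S2_S2inf[OF id_S2] by (auto simp: h_def)
  let ?a = "psi (inv g)" and ?b = "psi g"
  have val: "(\<Sum>i<2. \<Sum>j<2. cnj (c i) * c j * psi (h i \<circ> inv (h j))) =
      cnj (c 0) * c 1 * ?a + cnj (c 1) * c 0 * ?b" for c
    unfolding sum_lessThan_2_2 using z bij_comp_inv[OF bg] by (simp add: h_def)
  have q1: "Im (?a + ?b) = 0" "Re (?a + ?b) \<ge> 0"
    using positive_definiteD[OF p hS, of "\<lambda>_. 1"] unfolding val by simp_all
  have q2: "Re (- (?a + ?b)) \<ge> 0"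
    using positive_definiteD(2)[OF p hS, of "\<lambda>i. if i = 0 then 1 else -1"] unfolding val by simp
  have q3: "Im (\<i> * ?a - \<i> * ?b) = 0" "Re (\<i> * ?a - \<i> * ?b) \<ge> 0"
    using positive_definiteD[OF p hS, of "\<lambda>i. if i = 0 then 1 else \<i>"] unfolding val by simp_all
  have q4: "Re (- \<i> * ?a + \<i> * ?b) \<ge> 0"
    using positive_definiteD(2)[OF p hS, of "\<lambda>i. if i = 0 then 1 else - \<i>"] unfolding val by simp
  from q1 q2 q3 q4 show ?thesis by (simp add: complex_eq_iff)
qed

locale character =
  fixes chi :: "(point \<Rightarrow> point) \<Rightarrow> complex"
  assumes is_character: "is_character chi"
begin

lemma commute: "g \<in> S2inf \<Longrightarrow> h \<in> S2inf \<Longrightarrow> chi (g \<circ> h) = chi (h \<circ> g)"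
  using is_character by (simp add: is_character_def)

lemma chi_id [simp]: "chi id = 1"
  using is_character by (simp add: is_character_def)

lemma positive_definite: "positive_definite chi"
  using is_character by (simp add: is_character_iff)

lemmas positive_definite_chiD = positive_definiteD[OF positive_definite]

lemma conj_invariant:
  assumes "p \<in> S2 n" "q \<in> S2 n" "g \<in> S2 n" "q \<circ> p = id"
  shows "chi (p \<circ> g \<circ> q) = chi g"
proof -
  have "chi ((p \<circ> g) \<circ> q) = chi (q \<circ> (p \<circ> g))"
    using assms by (intro commute S2_S2inf comp_S2)
  also have "q \<circ> (p \<circ> g) = g"
    using assms(4) by (simp add: comp_assoc[symmetric])
  finally show ?thesis .
qed

lemma involution_value:
  assumes s: "s \<in> S2 n" and ss: "s \<circ> s = id"
  shows "Im (chi s) = 0" "\<bar>Re (chi s)\<bar> \<le> 1"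
proof -
  define g where "g = (\<lambda>i::nat. if i = 0 then id else s)"
  have gS: "\<forall>i<2. g i \<in> S2inf" using S2_S2inf[OF s] S2_S2inf[OF id_S2] by (auto simp: g_def)
  have val: "(\<Sum>i<2. \<Sum>j<2. cnj (c i) * c j * chi (g i \<circ> inv (g j))) =
     cnj (c 0) * c 0 + cnj (c 0) * c 1 * chi s + cnj (c 1) * c 0 * chi s + cnj (c 1) * c 1" for c
    unfolding sum_lessThan_2_2 by (simp add: g_def inv_involution[OF ss] ss)
  have p1: "Im (2 + 2 * chi s) = 0" "Re (2 + 2 * chi s) \<ge> 0"
    using positive_definite_chiD[OF gS, of "\<lambda>_. 1"] unfolding val by simp_all
  have p2: "Re (2 - 2 * chi s) \<ge> 0"
    using positive_definite_chiD(2)[OF gS, of "\<lambda>i. if i = 0 then 1 else -1"] unfolding val by simp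
  from p1 p2 show "Im (chi s) = 0" "\<bar>Re (chi s)\<bar> \<le> 1" by simp_all
qed

end

section \<open>Flips\<close>

definition depends_below :: "nat \<Rightarrow> point set \<Rightarrow> bool" where
  "depends_below N S \<longleftrightarrow> (\<forall>x y. (\<forall>i<N. x i = y i) \<longrightarrow> (x \<in> S \<longleftrightarrow> y \<in> S))"

definition ignores :: "nat set \<Rightarrow> point set \<Rightarrow> bool" where
  "ignores J S \<longleftrightarrow> (\<forall>x y. (\<forall>i. i \<notin> J \<longrightarrow> x i = y i) \<longrightarrow> (x \<in> S \<longleftrightarrow> y \<in> S))"

lemma depends_belowD: "depends_below N S \<Longrightarrow> \<forall>i<N. x i = y i \<Longrightarrow> x \<in> S \<longleftrightarrow> y \<in> S"
  by (simp add: depends_below_def)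

lemma ignoresD: "ignores J S \<Longrightarrow> \<forall>i. i \<notin> J \<longrightarrow> x i = y i \<Longrightarrow> x \<in> S \<longleftrightarrow> y \<in> S"
  unfolding ignores_def by blast

lemma ignores_fun_upd: "ignores J S \<Longrightarrow> j \<in> J \<Longrightarrow> x(j := v) \<in> S \<longleftrightarrow> x \<in> S"
  by (erule ignoresD) auto

lemma ignores_subset: "ignores K S \<Longrightarrow> J \<subseteq> K \<Longrightarrow> ignores J S"
  unfolding ignores_def by blast

lemma depends_below_Int: "depends_below N A \<Longrightarrow> depends_below N B \<Longrightarrow> depends_below N (A \<inter> B)"
  unfolding depends_below_def by blast

lemma ignores_Int: "ignores J A \<Longrightarrow> ignores J B \<Longrightarrow> ignores J (A \<inter> B)"
  unfolding ignores_def by blast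

definition block_cyl :: "nat \<Rightarrow> nat \<Rightarrow> bool list set \<Rightarrow> point set" where
  "block_cyl a b C = {x. map x [a..<b] \<in> C}"

lemma cyl_eq_block_cyl: "cyl K C = block_cyl 0 K C"
  by (simp add: cyl_def block_cyl_def)

lemma block_cyl_depends_below:
  assumes "b \<le> N"
  shows "depends_below N (block_cyl a b C)"
  unfolding depends_below_def
proof (intro allI impI)
  fix x y :: point assume "\<forall>i<N. x i = y i"
  with assms have e: "map x [a..<b] = map y [a..<b]" by (intro map_cong) auto
  show "x \<in> block_cyl a b C \<longleftrightarrow> y \<in> block_cyl a b C"
    unfolding block_cyl_def mem_Collect_eq e ..
qed

lemma block_cyl_ignores:
  assumes "\<forall>j\<in>J. j < a \<or> b \<le> j"
  shows "ignores J (block_cyl a b C)"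
  unfolding ignores_def
proof (intro allI impI)
  fix x y :: point assume xy: "\<forall>i. i \<notin> J \<longrightarrow> x i = y i"
  have e: "map x [a..<b] = map y [a..<b]"
  proof (rule map_cong[OF refl])
    fix i assume "i \<in> set [a..<b]"
    with assms have "i \<notin> J" by auto
    with xy show "x i = y i" by blast
  qed
  show "x \<in> block_cyl a b C \<longleftrightarrow> y \<in> block_cyl a b C"
    unfolding block_cyl_def mem_Collect_eq e ..
qed

lemma cyl_depends_below: "K \<le> N \<Longrightarrow> depends_below N (cyl K C)"
  unfolding cyl_eq_block_cyl by (rule block_cyl_depends_below)

lemma cyl_ignores: "\<forall>j\<in>J. K \<le> j \<Longrightarrow> ignores J (cyl K C)"
  unfolding cyl_eq_block_cyl by (rule block_cyl_ignores) auto

lemma cyl_Int: "cyl K C1 \<inter> cyl K C2 = cyl K (C1 \<inter> C2)"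
  by (auto simp: cyl_def)

lemma sA_involution:
  assumes "ignores {j} S"
  shows "sA S j \<circ> sA S j = id"
proof
  fix x
  show "(sA S j \<circ> sA S j) x = id x"
  proof (cases "x \<in> S")
    case False
    then have "x(j := \<not> x j) \<notin> S" using ignores_fun_upd[OF assms, of j x] by simp
    with False show ?thesis by (simp add: sA_def)
  qed (simp add: sA_def)
qed

lemma sA_S2:
  assumes S: "depends_below N S" and "j < N" and "ignores {j} S"
  shows "sA S j \<in> S2 N"
proof (rule S2I)
  show "bij (sA S j)" by (rule o_bij[OF sA_involution sA_involution]) fact+
  show "sA S j x i = x i" if "N \<le> i" for x i
    using that \<open>j < N\<close> by (simp add: sA_def)
  show "sA S j x i = sA S j y i" if xy: "\<forall>i<N. x i = y i" and "i < N" for x y i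
  proof -
    have "x \<in> S \<longleftrightarrow> y \<in> S" by (rule depends_belowD[OF S xy])
    with xy \<open>i < N\<close> \<open>j < N\<close> show ?thesis by (simp add: sA_def)
  qed
qed

lemma sA_UNIV: "sA UNIV j = id"
  by (simp add: sA_def fun_eq_iff)

definition coord_perm :: "(nat \<Rightarrow> nat) \<Rightarrow> point \<Rightarrow> point" where
  "coord_perm \<sigma> x = x \<circ> \<sigma>"

lemma coord_perm_involution: "\<sigma> \<circ> \<sigma> = id \<Longrightarrow> coord_perm \<sigma> \<circ> coord_perm \<sigma> = id"
  by (simp add: coord_perm_def fun_eq_iff comp_assoc[symmetric] pointfree_idE)

lemma coord_perm_S2:
  assumes inv: "\<sigma> \<circ> \<sigma> = id" and hi: "\<forall>i\<ge>N. \<sigma> i = i"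
  shows "coord_perm \<sigma> \<in> S2 N"
proof (rule S2I)
  show "bij (coord_perm \<sigma>)" by (rule o_bij[OF coord_perm_involution[OF inv] coord_perm_involution[OF inv]])
  show "coord_perm \<sigma> x i = x i" if "N \<le> i" for x i using hi that by (simp add: coord_perm_def)
  show "coord_perm \<sigma> x i = coord_perm \<sigma> y i" if xy: "\<forall>i<N. x i = y i" and "i < N" for x y i
  proof -
    \<comment> \<open>an involution fixing every \<open>i \<ge> N\<close> maps \<open>{..<N}\<close> into itself\<close>
    have "\<sigma> i < N"
    proof (rule ccontr)
      assume "\<not> \<sigma> i < N"
      then have "\<sigma> (\<sigma> i) = \<sigma> i" using hi by simp
      with fun_cong[OF inv, of i] \<open>i < N\<close> \<open>\<not> \<sigma> i < N\<close> show False by simp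
    qed
    with xy show ?thesis by (simp add: coord_perm_def)
  qed
qed

definition swap_index :: "nat \<Rightarrow> nat \<Rightarrow> nat \<Rightarrow> nat" where
  "swap_index a b i = (if i = a then b else if i = b then a else i)"

lemma swap_index_involution: "swap_index a b \<circ> swap_index a b = id"
  by (auto simp: swap_index_def fun_eq_iff)

text \<open>Conjugation by this involution merges the flip of \<open>m\<close> off \<open>D\<close> followed by the
  flip of \<open>j\<close> off \<open>B\<close> into the single flip of \<open>j\<close> off \<open>B \<inter> D\<close>.\<close>

definition merge_flips :: "point set \<Rightarrow> point set \<Rightarrow> nat \<Rightarrow> nat \<Rightarrow> point \<Rightarrow> point" where
  "merge_flips B D j m x =
     (if x \<notin> B \<and> x \<notin> D then x(m := (x j \<noteq> x m))
      else if x \<in> B \<and> x \<notin> D then x(j := x m, m := x j) else x)"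

lemma merge_flips_involution:
  assumes "j \<noteq> m" and iB: "ignores {j, m} B" and iD: "ignores {j, m} D"
  shows "merge_flips B D j m \<circ> merge_flips B D j m = id"
proof
  fix x
  let ?p = "merge_flips B D j m"
  note upd = ignores_fun_upd[OF iB] ignores_fun_upd[OF iD]
  consider (none) "x \<notin> B" "x \<notin> D" | (B) "x \<in> B" "x \<notin> D" | (D) "x \<in> D" by blast
  then show "(?p \<circ> ?p) x = id x"
  proof cases
    case none
    let ?y = "x(m := (x j \<noteq> x m))"
    have "?p (?p x) = ?y(m := (?y j \<noteq> ?y m))" using none by (simp add: merge_flips_def upd)
    also have "\<dots> = x" using \<open>j \<noteq> m\<close> by (intro ext) auto
    finally show ?thesis by simp
  next
    case B
    let ?y = "x(j := x m, m := x j)"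
    have "?p (?p x) = ?y(j := ?y m, m := ?y j)" using B by (simp add: merge_flips_def upd)
    also have "\<dots> = x" using \<open>j \<noteq> m\<close> by (intro ext) auto
    finally show ?thesis by simp
  qed (simp add: merge_flips_def)
qed

lemma merge_flips_S2:
  assumes "j \<noteq> m" and dB: "depends_below N B" and dD: "depends_below N D"
    and "j < N" "m < N" and "ignores {j, m} B" "ignores {j, m} D"
  shows "merge_flips B D j m \<in> S2 N"
proof (rule S2I)
  show "bij (merge_flips B D j m)"
    using merge_flips_involution[OF assms(1,6,7)] by (intro o_bij)
  show "merge_flips B D j m x i = x i" if "N \<le> i" for x i
    using that \<open>j < N\<close> \<open>m < N\<close> by (simp add: merge_flips_def)
  show "merge_flips B D j m x i = merge_flips B D j m y i" if xy: "\<forall>i<N. x i = y i" and "i < N" for x y i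
  proof -
    have "x \<in> B \<longleftrightarrow> y \<in> B" "x \<in> D \<longleftrightarrow> y \<in> D"
      using depends_belowD[OF dB xy] depends_belowD[OF dD xy] by simp_all
    with xy \<open>i < N\<close> \<open>j < N\<close> \<open>m < N\<close> show ?thesis by (simp add: merge_flips_def)
  qed
qed

lemma merge_flips_conj:
  assumes "j \<noteq> m" and iB: "ignores {j, m} B" and iD: "ignores {j, m} D"
  shows "merge_flips B D j m \<circ> (sA B j \<circ> sA D m) \<circ> merge_flips B D j m = sA (B \<inter> D) j"
proof
  fix x
  let ?p = "merge_flips B D j m"
  note upd = ignores_fun_upd[OF iB] ignores_fun_upd[OF iD]
  consider (none) "x \<notin> B" "x \<notin> D" | (B) "x \<in> B" "x \<notin> D" | (D) "x \<notin> B" "x \<in> D"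
     | (BD) "x \<in> B" "x \<in> D" by blast
  then show "(?p \<circ> (sA B j \<circ> sA D m) \<circ> ?p) x = sA (B \<inter> D) j x"
  proof cases
    case none
    let ?y = "x(m := (x j \<noteq> x m))"
    let ?z = "?y(m := \<not> ?y m)"
    let ?w = "?z(j := \<not> ?z j)"
    have "?p ((sA B j \<circ> sA D m) (?p x)) = ?w(m := (?w j \<noteq> ?w m))"
      using none by (simp add: merge_flips_def sA_def upd)
    also have "\<dots> = x(j := \<not> x j)" using \<open>j \<noteq> m\<close> by (intro ext) auto
    finally show ?thesis using none by (simp add: sA_def)
  next
    case B
    let ?y = "x(j := x m, m := x j)"
    let ?z = "?y(m := \<not> ?y m)"
    have "?p ((sA B j \<circ> sA D m) (?p x)) = ?z(j := ?z m, m := ?z j)"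
      using B by (simp add: merge_flips_def sA_def upd)
    also have "\<dots> = x(j := \<not> x j)" using \<open>j \<noteq> m\<close> by (intro ext) auto
    finally show ?thesis using B by (simp add: sA_def)
  next
    case D
    then show ?thesis by (simp add: merge_flips_def sA_def upd)
  next
    case BD
    then show ?thesis by (simp add: merge_flips_def sA_def)
  qed
qed

context character
begin

lemma chi_sA_swap_coord:
  assumes S: "depends_below N S" and "j < N" "j' < N" and ind: "ignores {j, j'} S"
  shows "chi (sA S j) = chi (sA S j')"
proof -
  let ?\<tau> = "swap_index j j'"
  let ?P = "coord_perm ?\<tau>"
  have P: "?P \<in> S2 N"
    using \<open>j < N\<close> \<open>j' < N\<close> by (intro coord_perm_S2 swap_index_involution) (auto simp: swap_index_def)
  have PP: "?P \<circ> ?P = id" by (rule coord_perm_involution[OF swap_index_involution])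
  have ind_j: "ignores {j} S" by (rule ignores_subset[OF ind]) simp
  have mem: "x \<circ> ?\<tau> \<in> S \<longleftrightarrow> x \<in> S" for x
    by (rule ignoresD[OF ind]) (auto simp: swap_index_def)
  have "?P \<circ> sA S j \<circ> ?P = sA S j'"
  proof
    fix x :: point
    have \<tau>\<tau>: "x \<circ> ?\<tau> \<circ> ?\<tau> = x"
      by (simp add: comp_assoc swap_index_involution)
    show "(?P \<circ> sA S j \<circ> ?P) x = sA S j' x"
    proof (cases "x \<in> S")
      case True
      with mem[of x] \<tau>\<tau> show ?thesis by (simp add: sA_def coord_perm_def)
    next
      case False
      with mem[of x] have "(?P \<circ> sA S j \<circ> ?P) x = ((x \<circ> ?\<tau>)(j := \<not> (x \<circ> ?\<tau>) j)) \<circ> ?\<tau>"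
        by (simp add: sA_def coord_perm_def)
      also have "\<dots> = x(j' := \<not> x j')" by (simp add: swap_index_def fun_eq_iff)
      finally show ?thesis using False by (simp add: sA_def)
    qed
  qed
  moreover have "chi (?P \<circ> sA S j \<circ> ?P) = chi (sA S j)"
    by (rule conj_invariant[OF P P sA_S2[OF S \<open>j < N\<close> ind_j] PP])
  ultimately show ?thesis by simp
qed

lemma chi_sA_comp_sA:
  assumes "j \<noteq> m" and dB: "depends_below N B" and dD: "depends_below N D"
    and "j < N" "m < N" and iB: "ignores {j, m} B" and iD: "ignores {j, m} D"
  shows "chi (sA B j \<circ> sA D m) = chi (sA (B \<inter> D) j)"
proof -
  let ?p = "merge_flips B D j m"
  have p: "?p \<in> S2 N" by (rule merge_flips_S2) fact+
  have "sA B j \<circ> sA D m \<in> S2 N"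
    using assms by (intro comp_S2 sA_S2) (auto intro: ignores_subset)
  then have "chi (?p \<circ> (sA B j \<circ> sA D m) \<circ> ?p) = chi (sA B j \<circ> sA D m)"
    by (rule conj_invariant[OF p p _ merge_flips_involution[OF \<open>j \<noteq> m\<close> iB iD]])
  then show ?thesis using merge_flips_conj[OF \<open>j \<noteq> m\<close> iB iD] by simp
qed

end

section \<open>The value of a character at a flip\<close>

lemma sA_cyl_S2: "K \<le> i \<Longrightarrow> i < N \<Longrightarrow> sA (cyl K C) i \<in> S2 N"
  by (rule sA_S2[OF cyl_depends_below]) (auto intro: cyl_ignores)

lemma sA_cyl_involution: "K \<le> i \<Longrightarrow> sA (cyl K C) i \<circ> sA (cyl K C) i = id"
  by (rule sA_involution) (auto intro: cyl_ignores)

lemma cyl_lift: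
  assumes "C \<subseteq> Xn K"
  shows "cyl K C = cyl (K + j) {xs. length xs = K + j \<and> take K xs \<in> C \<and> drop K xs \<in> Xn j}"
  by (auto simp: cyl_def take_map Xn_def min_def)

lemma cyl_Xn: "cyl K (Xn K) = UNIV"
  by (simp add: cyl_def Xn_def)

lemma sum_lessThan_add_self:
  fixes F :: "nat \<Rightarrow> 'a::comm_monoid_add"
  shows "(\<Sum>a<N + N. F a) = (\<Sum>a<N. F a) + (\<Sum>a<N. F (a + N))"
proof -
  have "(\<Sum>a<N + N. F a) = sum F {0..<N} + sum F {N..<N + N}"
    by (simp add: atLeast0LessThan[symmetric] sum.atLeastLessThan_concat)
  also have "sum F {N..<N + N} = (\<Sum>a<N. F (a + N))"
    using sum.shift_bounds_nat_ivl[of F 0 N N] by (simp add: atLeast0LessThan)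
  finally show ?thesis by (simp add: atLeast0LessThan)
qed

lemma double_sum_lessThan_add_self:
  fixes F :: "nat \<Rightarrow> nat \<Rightarrow> 'a::comm_monoid_add"
  shows "(\<Sum>a<N + N. \<Sum>b<N + N. F a b) =
    (\<Sum>i<N. \<Sum>j<N. F i j + F i (j + N) + F (i + N) j + F (i + N) (j + N))"
  by (simp add: sum_lessThan_add_self sum.distrib add_ac)

lemma double_sum_diagonal:
  fixes x y :: complex
  shows "(\<Sum>i<R. \<Sum>j<R. if i = j then x else y) = of_nat R * x + of_nat R * (of_nat R - 1) * y"
proof -
  have "(\<Sum>j<R. if i = j then x else y) = of_nat R * y + (x - y)" if "i < R" for i
  proof -
    have "(\<Sum>j<R. if i = j then x else y) = (\<Sum>j<R. y + (if i = j then x - y else 0))"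
      by (rule sum.cong) auto
    with that show ?thesis by (simp add: sum.distrib)
  qed
  then have "(\<Sum>i<R. \<Sum>j<R. if i = j then x else y) = (\<Sum>i<R. of_nat R * y + (x - y))"
    by (intro sum.cong) auto
  then show ?thesis by (simp add: algebra_simps)
qed

lemma obtain_bij_Xn_preserving:
  assumes C: "C \<subseteq> Xn K" and C': "C' \<subseteq> Xn K" and card: "card C = card C'"
  obtains \<rho> where "bij_betw \<rho> (Xn K) (Xn K)" "\<And>ys. ys \<in> Xn K \<Longrightarrow> \<rho> ys \<in> C' \<longleftrightarrow> ys \<in> C"
proof -
  have fin: "finite C" "finite C'" using finite_subset[OF C finite_Xn] finite_subset[OF C' finite_Xn] .
  obtain h1 where h1: "bij_betw h1 C C'" using finite_same_card_bij[OF fin card] by blast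
  have "card (Xn K - C) = card (Xn K - C')"
    using card_Diff_subset[OF fin(1) C] card_Diff_subset[OF fin(2) C'] card by simp
  then obtain h2 where h2: "bij_betw h2 (Xn K - C) (Xn K - C')"
    using finite_same_card_bij by (metis finite_Diff finite_Xn)
  define \<rho> where "\<rho> xs = (if xs \<in> C then h1 xs else h2 xs)" for xs
  have "bij_betw \<rho> (C \<union> (Xn K - C)) (C' \<union> (Xn K - C'))"
    unfolding \<rho>_def by (rule bij_betw_disjoint_Un[OF h1 h2]) auto
  moreover have "C \<union> (Xn K - C) = Xn K" "C' \<union> (Xn K - C') = Xn K" using C C' by auto
  ultimately have "bij_betw \<rho> (Xn K) (Xn K)" by simp
  moreover have "\<rho> ys \<in> C' \<longleftrightarrow> ys \<in> C" if "ys \<in> Xn K" for ys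
    using that bij_betwE[OF h1] bij_betwE[OF h2] by (cases "ys \<in> C") (auto simp: \<rho>_def)
  ultimately show thesis by (rule that)
qed

context character
begin

lemma chi_sA_cyl_card:
  assumes C: "C \<subseteq> Xn K" and C': "C' \<subseteq> Xn K" and card: "card C = card C'"
  shows "chi (sA (cyl K C) K) = chi (sA (cyl K C') K)"
proof -
  obtain \<rho> where \<rho>: "bij_betw \<rho> (Xn K) (Xn K)" and \<rho>_C: "\<And>ys. ys \<in> Xn K \<Longrightarrow> \<rho> ys \<in> C \<longleftrightarrow> ys \<in> C'"
    using obtain_bij_Xn_preserving[OF C' C card[symmetric]] by blast
  let ?P = "act K (inv_into (Xn K) \<rho>)" and ?Q = "act K \<rho>"
  have PQ: "?P \<circ> ?Q = id" "?Q \<circ> ?P = id" using act_inv_into[OF \<rho>] by simp_all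
  have P: "?P \<in> S2 K" and Q: "?Q \<in> S2 K"
    using act_S2 \<rho> bij_betw_inv_into[OF \<rho>] by blast+
  have "?P \<circ> sA (cyl K C) K \<circ> ?Q = sA (cyl K C') K"
  proof
    fix x
    have "map x [0..<K] \<in> Xn K" by (simp add: Xn_def)
    moreover have "map (?Q x) [0..<K] = \<rho> (map x [0..<K])"
      by (rule map_act) (use bij_betwE[OF \<rho>] in \<open>auto simp: Xn_def\<close>)
    ultimately have mem: "?Q x \<in> cyl K C \<longleftrightarrow> x \<in> cyl K C'"
      using \<rho>_C by (simp add: cyl_def)
    have PQx: "?P (?Q x) = x" using fun_cong[OF PQ(1), of x] by simp
    show "(?P \<circ> sA (cyl K C) K \<circ> ?Q) x = sA (cyl K C') K x"
    proof (cases "x \<in> cyl K C'")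
      case False
      have "(?P \<circ> sA (cyl K C) K \<circ> ?Q) x = ?P ((?Q x)(K := \<not> ?Q x K))"
        using False mem by (simp add: sA_def)
      also have "\<dots> = (?P (?Q x))(K := \<not> ?Q x K)" by (rule S2_fun_upd_high[OF P]) simp
      also have "\<dots> = x(K := \<not> x K)" using PQx S2_fixes_high[OF Q, of K x] by simp
      finally show ?thesis using False by (simp add: sA_def)
    qed (use mem PQx in \<open>simp add: sA_def\<close>)
  qed
  moreover have "chi (?P \<circ> sA (cyl K C) K \<circ> ?Q) = chi (sA (cyl K C) K)"
    by (rule conj_invariant[OF S2_mono[OF P] S2_mono[OF Q] sA_cyl_S2[of K K "Suc K"] PQ(2)]) simp_all
  ultimately show ?thesis by simp
qed

text \<open>\<open>flip_value K n\<close> is the paper's \<open>tr(P\<^sup>A)\<close> for every \<open>A = cyl K C\<close> with \<open>card C = n\<close>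
  (\<open>chi_sA_cyl\<close>); which \<open>C\<close> is chosen does not matter.\<close>

definition flip_value :: "nat \<Rightarrow> nat \<Rightarrow> real" where
  "flip_value K n = Re (chi (sA (cyl K (SOME C. C \<subseteq> Xn K \<and> card C = n)) K))"

lemma chi_sA_cyl:
  assumes C: "C \<subseteq> Xn K" and "K \<le> i"
  shows "chi (sA (cyl K C) i) = complex_of_real (flip_value K (card C))"
proof -
  define C0 where "C0 = (SOME C0. C0 \<subseteq> Xn K \<and> card C0 = card C)"
  have C0: "C0 \<subseteq> Xn K" "card C0 = card C"
    unfolding C0_def using someI_ex[of "\<lambda>C0. C0 \<subseteq> Xn K \<and> card C0 = card C"] C by blast+
  have "chi (sA (cyl K C) i) = chi (sA (cyl K C) K)"
    using \<open>K \<le> i\<close> by (intro chi_sA_swap_coord[OF cyl_depends_below[of K "Suc i"]] cyl_ignores) auto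
  also have "\<dots> = chi (sA (cyl K C0) K)"
    by (rule chi_sA_cyl_card[OF C C0(1) C0(2)[symmetric]])
  finally have "chi (sA (cyl K C) i) = chi (sA (cyl K C0) K)" .
  moreover have "Im (chi (sA (cyl K C) i)) = 0"
    using \<open>K \<le> i\<close> by (intro involution_value(1)[OF sA_cyl_S2[of K i "Suc i"]] sA_cyl_involution) auto
  ultimately show ?thesis by (simp add: flip_value_def C0_def complex_eq_iff)
qed

lemma flip_value_abs_le_1:
  assumes "n \<le> 2 ^ K"
  shows "\<bar>flip_value K n\<bar> \<le> 1"
proof -
  obtain C where C: "C \<subseteq> Xn K" "card C = n" using obtain_subset_Xn_with_card[OF assms] .
  have "\<bar>Re (chi (sA (cyl K C) K))\<bar> \<le> 1"
    by (rule involution_value(2)[OF sA_cyl_S2[of K K "Suc K"] sA_cyl_involution]) auto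
  with chi_sA_cyl[OF C(1) order.refl] C(2) show ?thesis by simp
qed

lemma flip_value_lift:
  assumes "n \<le> 2 ^ K"
  shows "flip_value (K + j) (n * 2 ^ j) = flip_value K n"
proof -
  obtain C where C: "C \<subseteq> Xn K" "card C = n" using obtain_subset_Xn_with_card[OF assms] .
  let ?C' = "{xs. length xs = K + j \<and> take K xs \<in> C \<and> drop K xs \<in> Xn j}"
  have "card ?C' = n * 2 ^ j" using card_append_set[OF C(1) order.refl] C(2) card_Xn by simp
  moreover have "?C' \<subseteq> Xn (K + j)" by (auto simp: Xn_def)
  ultimately have "complex_of_real (flip_value (K + j) (n * 2 ^ j)) = chi (sA (cyl K C) (K + j))"
    using chi_sA_cyl[of ?C' "K + j" "K + j"] cyl_lift[OF C(1), of j] by simp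
  also have "\<dots> = complex_of_real (flip_value K n)"
    using chi_sA_cyl[OF C(1), of "K + j"] C(2) by simp
  finally show ?thesis by simp
qed

lemma flip_value_full: "flip_value K (2 ^ K) = 1"
  using chi_sA_cyl[of "Xn K" K K] by (simp add: cyl_Xn sA_UNIV card_Xn)

lemma chi_sA_cyl_comp_sA_cyl:
  assumes C1: "C1 \<subseteq> Xn K" and C2: "C2 \<subseteq> Xn K" and "K \<le> i" "K \<le> j" "i \<noteq> j"
  shows "chi (sA (cyl K C1) i \<circ> inv (sA (cyl K C2) j)) = complex_of_real (flip_value K (card (C1 \<inter> C2)))"
proof -
  have "inv (sA (cyl K C2) j) = sA (cyl K C2) j"
    by (rule inv_involution[OF sA_cyl_involution]) fact
  moreover have "chi (sA (cyl K C1) i \<circ> sA (cyl K C2) j) = chi (sA (cyl K C1 \<inter> cyl K C2) i)"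
    using assms by (intro chi_sA_comp_sA[of _ _ "Suc (max i j)"] cyl_depends_below cyl_ignores) auto
  moreover have "chi (sA (cyl K C1 \<inter> cyl K C2) i) = complex_of_real (flip_value K (card (C1 \<inter> C2)))"
    unfolding cyl_Int using C1 \<open>K \<le> i\<close> by (intro chi_sA_cyl) auto
  ultimately show ?thesis by simp
qed

text \<open>Positive definiteness on \<open>R = n + 1\<close> flips off \<open>cyl K Cb\<close> and \<open>R\<close> flips off \<open>cyl K Ca\<close>,
  at pairwise distinct coordinates and with coefficients \<open>\<plusminus>1\<close>.\<close>

lemma flip_value_mono_bound:
  assumes "a \<le> b" and b: "b \<le> 2 ^ K"
  shows "0 \<le> 2 - 2 * flip_value K a + real n * (flip_value K b - flip_value K a)"
proof -
  obtain Cb where Cb: "Cb \<subseteq> Xn K" "card Cb = b" using obtain_subset_Xn_with_card[OF b] .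
  with \<open>a \<le> b\<close> obtain Ca where Ca: "Ca \<subseteq> Cb" "card Ca = a"
    by (metis obtain_subset_with_card_n)
  let ?ga = "flip_value K a" and ?gb = "flip_value K b"
  define R where "R = Suc n"
  define C where "C i = (if i < R then Cb else Ca)" for i
  define h where "h i = sA (cyl K (C i)) (K + i)" for i
  define d where "d i = (if i < R then (1::complex) else -1)" for i
  have CX: "C i \<subseteq> Xn K" for i using Cb Ca by (auto simp: C_def)
  have hS: "\<forall>i<R + R. h i \<in> S2inf"
    unfolding h_def by (auto intro!: S2_S2inf[OF sA_cyl_S2[of K _ "Suc (K + R + R)"]])
  have card_C: "card (C i \<inter> C j) = (if i < R \<and> j < R then b else a)" for i j
    using Ca Cb Int_absorb1[OF Ca(1)] Int_absorb2[OF Ca(1)] by (simp add: C_def)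
  have v: "chi (h i \<circ> inv (h j)) =
      (if i = j then 1 else complex_of_real (if i < R \<and> j < R then ?gb else ?ga))" for i j
  proof (cases "i = j")
    case True
    then show ?thesis
      using inv_involution[OF sA_cyl_involution] sA_cyl_involution by (simp add: h_def)
  next
    case False
    then have "chi (h i \<circ> inv (h j)) = complex_of_real (flip_value K (card (C i \<inter> C j)))"
      unfolding h_def by (intro chi_sA_cyl_comp_sA_cyl CX) auto
    with False card_C[of i j] show ?thesis by simp
  qed
  have "(\<Sum>i<R + R. \<Sum>j<R + R. cnj (d i) * d j * chi (h i \<circ> inv (h j))) =
    (\<Sum>i<R. \<Sum>j<R. if i = j then 2 - 2 * complex_of_real ?ga
                  else complex_of_real ?gb - complex_of_real ?ga)"
    unfolding double_sum_lessThan_add_self by (intro sum.cong refl) (simp add: v d_def)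
  also have "\<dots> = of_nat R * (2 - 2 * complex_of_real ?ga)
      + of_nat R * (of_nat R - 1) * (complex_of_real ?gb - complex_of_real ?ga)"
    by (rule double_sum_diagonal)
  finally have "0 \<le> real R * (2 - 2 * ?ga) + real R * (real R - 1) * (?gb - ?ga)"
    using positive_definite_chiD(2)[OF hS, of d] by simp
  then have "0 \<le> real R * ((2 - 2 * ?ga) + real n * (?gb - ?ga))"
    by (simp add: R_def algebra_simps)
  then show ?thesis by (simp add: R_def zero_le_mult_iff)
qed

lemma flip_value_mono:
  assumes "a \<le> b" and "b \<le> 2 ^ K"
  shows "flip_value K a \<le> flip_value K b"
proof (rule ccontr)
  let ?ga = "flip_value K a" and ?gb = "flip_value K b"
  assume "\<not> ?ga \<le> ?gb"
  then have pos: "0 < ?ga - ?gb" by simp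
  obtain n where "(2 - 2 * ?ga) / (?ga - ?gb) < real n" using reals_Archimedean2 by blast
  with pos have "2 - 2 * ?ga < real n * (?ga - ?gb)" by (simp add: field_simps)
  with flip_value_mono_bound[OF assms, of n] show False by (simp add: algebra_simps)
qed

text \<open>Positive definiteness on \<open>id\<close> and the flips off \<open>x\<^sub>0 = 1\<close> and off \<open>x\<^sub>0 = 0\<close>,
  whose product is the flip off the empty cylinder.\<close>

lemma flip_value_1_bound: "0 \<le> 3 - 4 * flip_value 1 1 + 2 * flip_value 1 0"
proof -
  define a where "a = sA (cyl 1 {[True]}) 1"
  define b where "b = sA (cyl 1 {[False]}) 1"
  define z where "z = sA (cyl 1 {}) 1"
  have ab: "a \<circ> b = z" "b \<circ> a = z"
    unfolding a_def b_def z_def by (auto simp: sA_def cyl_def fun_eq_iff)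
  have aa: "a \<circ> a = id" "b \<circ> b = id" unfolding a_def b_def by (simp_all add: sA_cyl_involution)
  have va: "chi a = complex_of_real (flip_value 1 1)" "chi b = complex_of_real (flip_value 1 1)"
    "chi z = complex_of_real (flip_value 1 0)"
    unfolding a_def b_def z_def by (simp_all add: chi_sA_cyl Xn_def)
  define h where "h i = (if i = 0 then id else if i = 1 then a else b)" for i :: nat
  define d where "d i = (if i = 0 then (1::complex) else -1)" for i :: nat
  have "a \<in> S2 2" "b \<in> S2 2" unfolding a_def b_def by (simp_all add: sA_cyl_S2)
  then have hS: "\<forall>i<3. h i \<in> S2inf"
    by (auto simp: h_def intro: S2_S2inf)
  have "(\<Sum>i<3. \<Sum>j<3. cnj (d i) * d j * chi (h i \<circ> inv (h j))) =
      3 - 4 * complex_of_real (flip_value 1 1) + 2 * complex_of_real (flip_value 1 0)"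
    by (simp add: numeral_3_eq_3 numeral_2_eq_2 h_def d_def inv_involution aa ab va)
  with positive_definite_chiD(2)[OF hS, of d] show ?thesis by simp
qed

end

section \<open>Multiplicativity\<close>

lemma complex_split_midpoint:
  fixes z w :: complex and r :: real
  assumes "-1 < r" "r < 1"
  shows "z = complex_of_real ((1 + r) / 2) * (complex_of_real (1 / (1 + r)) * (z + w))
    + complex_of_real (1 - (1 + r) / 2) * (complex_of_real (1 / (1 - r)) * (z - w))"
proof -
  have "(1 + r) / 2 * (1 / (1 + r)) = 1 / 2" "(1 - (1 + r) / 2) * (1 / (1 - r)) = 1 / 2"
    using assms by (simp_all add: field_simps)
  then have half: "complex_of_real ((1 + r) / 2) * complex_of_real (1 / (1 + r)) = 1 / 2"
    "complex_of_real (1 - (1 + r) / 2) * complex_of_real (1 / (1 - r)) = 1 / 2"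
    by (simp_all only: of_real_mult[symmetric]) simp_all
  have "complex_of_real ((1 + r) / 2) * (complex_of_real (1 / (1 + r)) * (z + w))
      + complex_of_real (1 - (1 + r) / 2) * (complex_of_real (1 / (1 - r)) * (z - w))
      = 1 / 2 * (z + w) + 1 / 2 * (z - w)"
    unfolding mult.assoc[symmetric] half ..
  also have "\<dots> = z" by (simp add: field_simps)
  finally show ?thesis by (rule sym)
qed

text \<open>\<open>T m\<close> models \<open>\<pi>(s\<^sup>A\<^sub>m)\<close> for large \<open>m\<close>, and \<open>chi_T g\<close> models \<open>tr(\<pi>(g) P\<^sup>A)\<close>. Since \<open>P\<^sup>A\<close> is a
  central self-adjoint contraction, both \<open>\<chi> \<plusminus> chi_T\<close> are positive definite and central;
  indecomposability then forces \<open>chi_T = tr(P\<^sup>A) \<chi>\<close>.\<close>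

locale asymptotically_central_involution = character +
  fixes T :: "nat \<Rightarrow> point \<Rightarrow> point" and L :: nat
  assumes T_S2: "T m \<in> S2 (m + L)"
    and T_involution: "T m \<circ> T m = id"
    and T_commute: "g \<in> S2 n \<Longrightarrow> n \<le> m \<Longrightarrow> T m \<circ> g = g \<circ> T m"
    and chi_comp_T_indep: "g \<in> S2 n \<Longrightarrow> n \<le> m \<Longrightarrow> n \<le> m' \<Longrightarrow> chi (g \<circ> T m) = chi (g \<circ> T m')"
begin

definition chi_T :: "(point \<Rightarrow> point) \<Rightarrow> complex" where
  "chi_T g = chi (g \<circ> T (SOME n. g \<in> S2 n))"

lemma chi_T_eq:
  assumes "g \<in> S2 n" "n \<le> m"
  shows "chi_T g = chi (g \<circ> T m)"
proof -
  have "g \<in> S2 (SOME n. g \<in> S2 n)" using assms(1) by (rule someI)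
  then have "g \<in> S2 (min (SOME n. g \<in> S2 n) n)" using assms(1) by (simp add: min_def)
  then show ?thesis unfolding chi_T_def by (rule chi_comp_T_indep) (use assms(2) in auto)
qed

lemma chi_T_id: "chi_T id = chi (T 0)"
  using chi_T_eq[of id 0 0] by simp

lemma chi_T_commute:
  assumes "g \<in> S2inf" "h \<in> S2inf"
  shows "chi_T (g \<circ> h) = chi_T (h \<circ> g)"
proof -
  obtain M where g: "g \<in> S2 M" and h: "h \<in> S2 M"
    using S2inf_finite_family_S2[of 2 "\<lambda>i. if i = 0 then g else h"] assms
    by (auto simp: numeral_2_eq_2 less_Suc_eq)
  have hT: "h \<circ> T M \<in> S2inf" using S2_mono[OF h, of "M + L"] T_S2 by (auto intro: S2_S2inf comp_S2)
  have "chi_T (g \<circ> h) = chi (g \<circ> (h \<circ> T M))"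
    by (simp add: chi_T_eq[OF comp_S2[OF g h] order.refl] comp_assoc)
  also have "\<dots> = chi (h \<circ> (T M \<circ> g))"
    using commute[OF S2_S2inf[OF g] hT] by (simp add: comp_assoc)
  also have "\<dots> = chi_T (h \<circ> g)"
    by (simp add: chi_T_eq[OF comp_S2[OF h g] order.refl] T_commute[OF g order.refl] comp_assoc)
  finally show ?thesis .
qed

lemma chi_comp_T_inv:
  assumes g: "g \<in> S2 M" and h: "h \<in> S2 M"
  shows "chi (g \<circ> inv (h \<circ> T M)) = chi_T (g \<circ> inv h)"
    and "chi ((g \<circ> T M) \<circ> inv h) = chi_T (g \<circ> inv h)"
    and "chi ((g \<circ> T M) \<circ> inv (h \<circ> T M)) = chi (g \<circ> inv h)"
proof -
  have chi_T_eq': "chi_T (g \<circ> inv h) = chi (g \<circ> inv h \<circ> T M)"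
    by (rule chi_T_eq[OF comp_S2[OF g inv_S2[OF h]] order.refl])
  have T_inv: "inv (T M) = T M" by (rule inv_involution[OF T_involution])
  have inv_hT: "inv (h \<circ> T M) = T M \<circ> inv h"
    using o_inv_distrib[OF S2_bij[OF h] S2_bij[OF T_S2]] T_inv by simp
  have cm: "T M \<circ> inv h = inv h \<circ> T M" by (rule T_commute[OF inv_S2[OF h] order.refl])
  show "chi (g \<circ> inv (h \<circ> T M)) = chi_T (g \<circ> inv h)"
    using chi_T_eq' inv_hT cm by (simp add: comp_assoc)
  show "chi ((g \<circ> T M) \<circ> inv h) = chi_T (g \<circ> inv h)"
    using chi_T_eq' cm by (simp add: comp_assoc)
  have "(g \<circ> T M) \<circ> inv (h \<circ> T M) = g \<circ> (T M \<circ> T M) \<circ> inv h"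
    using inv_hT by (simp add: comp_assoc)
  then show "chi ((g \<circ> T M) \<circ> inv (h \<circ> T M)) = chi (g \<circ> inv h)"
    by (simp add: T_involution)
qed

text \<open>The quadratic form of \<open>\<chi> + e chi_T\<close> on \<open>g\<^sub>i\<close> with coefficients \<open>c\<^sub>i\<close> is half the quadratic
  form of \<open>\<chi>\<close> on \<open>g\<^sub>i, g\<^sub>i T\<close> with coefficients \<open>c\<^sub>i, e c\<^sub>i\<close>.\<close>

lemma positive_definite_chi_add_chi_T:
  assumes e: "e = 1 \<or> e = -1"
  shows "positive_definite (\<lambda>g. chi g + complex_of_real e * chi_T g)"
  unfolding positive_definite_def Let_def
proof (intro allI impI)
  fix N :: nat and g :: "nat \<Rightarrow> point \<Rightarrow> point" and c :: "nat \<Rightarrow> complex"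
  assume "\<forall>i<N. g i \<in> S2inf"
  then obtain M where M: "\<forall>i<N. g i \<in> S2 M" using S2inf_finite_family_S2 by blast
  let ?T = "T M"
  define g' where "g' a = (if a < N then g a else g (a - N) \<circ> ?T)" for a
  define d where "d a = (if a < N then c a else complex_of_real e * c (a - N))" for a
  have g'S: "\<forall>a<N + N. g' a \<in> S2inf"
  proof (intro allI impI)
    fix a assume "a < N + N"
    then show "g' a \<in> S2inf"
      using M S2_mono[of _ M "M + L"] T_S2 by (auto simp: g'_def intro!: S2_S2inf comp_S2)
  qed
  have block: "cnj (d i) * d j * chi (g' i \<circ> inv (g' j))
      + cnj (d i) * d (j + N) * chi (g' i \<circ> inv (g' (j + N)))
      + cnj (d (i + N)) * d j * chi (g' (i + N) \<circ> inv (g' j))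
      + cnj (d (i + N)) * d (j + N) * chi (g' (i + N) \<circ> inv (g' (j + N)))
      = 2 * (cnj (c i) * c j * (chi (g i \<circ> inv (g j)) + e * chi_T (g i \<circ> inv (g j))))"
    if "i < N" "j < N" for i j
  proof -
    have "cnj (complex_of_real e) = complex_of_real e" "complex_of_real e * complex_of_real e = 1"
      using e by auto
    with that M show ?thesis
      by (simp add: g'_def d_def chi_comp_T_inv algebra_simps)
  qed
  have "(\<Sum>a<N + N. \<Sum>b<N + N. cnj (d a) * d b * chi (g' a \<circ> inv (g' b))) =
     2 * (\<Sum>i<N. \<Sum>j<N. cnj (c i) * c j * (chi (g i \<circ> inv (g j)) + e * chi_T (g i \<circ> inv (g j))))"
    unfolding double_sum_lessThan_add_self sum_distrib_left using block by (simp add: add.assoc)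
  then show "Im (\<Sum>i<N. \<Sum>j<N. cnj (c i) * c j * (chi (g i \<circ> inv (g j)) + e * chi_T (g i \<circ> inv (g j)))) = 0 \<and>
      Re (\<Sum>i<N. \<Sum>j<N. cnj (c i) * c j * (chi (g i \<circ> inv (g j)) + e * chi_T (g i \<circ> inv (g j)))) \<ge> 0"
    using positive_definite_chiD[OF g'S, of d] by simp
qed

lemma is_character_scaled_chi_add_chi_T:
  assumes e: "e = 1 \<or> e = -1" and pos: "0 < 1 + e * Re (chi (T 0))"
  shows "is_character (\<lambda>g. complex_of_real (1 / (1 + e * Re (chi (T 0)))) * (chi g + e * chi_T g))"
  unfolding is_character_iff
proof (intro conjI ballI)
  show "positive_definite (\<lambda>g. complex_of_real (1 / (1 + e * Re (chi (T 0)))) * (chi g + e * chi_T g))"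
    using pos by (intro positive_definite_scale positive_definite_chi_add_chi_T e) simp
  have "chi (T 0) = complex_of_real (Re (chi (T 0)))"
    using involution_value(1)[OF T_S2 T_involution] by (simp add: complex_eq_iff)
  moreover have "1 + complex_of_real e * complex_of_real (Re (chi (T 0))) \<noteq> 0"
    using pos by (simp add: complex_eq_iff)
  ultimately show "complex_of_real (1 / (1 + e * Re (chi (T 0)))) * (chi id + e * chi_T id) = 1"
    by (simp add: chi_T_id field_simps)
qed (simp add: commute chi_T_commute)

lemma chi_T_eq_mult:
  assumes indec: "indecomposable_character chi" and g: "g \<in> S2inf"
  shows "chi_T g = chi (T 0) * chi g"
proof -
  define r where "r = Re (chi (T 0))"
  have r: "chi (T 0) = complex_of_real r" "\<bar>r\<bar> \<le> 1"
    using involution_value[OF T_S2 T_involution] by (simp_all add: r_def complex_eq_iff)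
  let ?psi = "\<lambda>e g. chi g + complex_of_real e * chi_T g"
  have psi_vanishes: "?psi e g = 0" if "e = 1 \<or> e = -1" "?psi e id = 0" for e
    using positive_definite_vanishes[OF positive_definite_chi_add_chi_T[OF that(1)] that(2) g] .
  consider "r = 1" | "r = -1" | "-1 < r" "r < 1" using r(2) by linarith
  then show ?thesis
  proof cases
    case 1
    with psi_vanishes[of "-1"] r(1) show ?thesis by (simp add: chi_T_id)
  next
    case 2
    with psi_vanishes[of 1] r(1) show ?thesis by (simp add: chi_T_id add_eq_0_iff)
  next
    case 3
    define chi' where "chi' e g = complex_of_real (1 / (1 + e * r)) * ?psi e g" for e g
    have "is_character (chi' 1)"
      unfolding chi'_def r_def by (rule is_character_scaled_chi_add_chi_T) (use 3 in \<open>simp_all add: r_def\<close>)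
    moreover have "is_character (chi' (-1))"
      unfolding chi'_def r_def by (rule is_character_scaled_chi_add_chi_T) (use 3 in \<open>simp_all add: r_def\<close>)
    moreover have "0 < (1 + r) / 2" "(1 + r) / 2 < 1" using 3 by auto
    moreover have "chi g = complex_of_real ((1 + r) / 2) * chi' 1 g
        + complex_of_real (1 - (1 + r) / 2) * chi' (-1) g" for g
      using complex_split_midpoint[OF 3, of "chi g" "chi_T g"] by (simp add: chi'_def)
    ultimately have "chi' 1 g = chi' (-1) g"
      using indec g unfolding indecomposable_character_def by blast
    moreover have "1 + complex_of_real r \<noteq> 0" "1 - complex_of_real r \<noteq> 0"
      using 3 by (simp_all add: complex_eq_iff)
    ultimately have "(1 - r) * (chi g + chi_T g) = (1 + r) * (chi g - chi_T g)"
      by (simp add: chi'_def field_simps)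
    then show ?thesis by (simp add: r(1) algebra_simps)
  qed
qed

lemma chi_comp_T:
  assumes "indecomposable_character chi" "g \<in> S2 n" "n \<le> m"
  shows "chi (g \<circ> T m) = chi (T 0) * chi g"
  using chi_T_eq[OF assms(2,3)] chi_T_eq_mult[OF assms(1) S2_S2inf[OF assms(2)]] by simp

end

text \<open>The copy of the flip off \<open>cyl l C\<close> moved to the coordinates \<open>m, \<dots>, m + l\<close>; for fixed
  \<open>l\<close> and \<open>C\<close> these form an asymptotically central family of involutions.\<close>

definition block_flip :: "nat \<Rightarrow> bool list set \<Rightarrow> nat \<Rightarrow> point \<Rightarrow> point" where
  "block_flip l C m = sA (block_cyl m (m + l) C) (m + l)"

definition swap_blocks :: "nat \<Rightarrow> nat \<Rightarrow> nat \<Rightarrow> nat \<Rightarrow> nat" where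
  "swap_blocks L m m' i =
     (if m \<le> i \<and> i < m + L then i - m + m' else if m' \<le> i \<and> i < m' + L then i - m' + m else i)"

lemma swap_blocks_involution: "m + L \<le> m' \<Longrightarrow> swap_blocks L m m' \<circ> swap_blocks L m m' = id"
  by (auto simp: swap_blocks_def fun_eq_iff)

lemma block_flip_S2: "block_flip l C m \<in> S2 (m + Suc l)"
  unfolding block_flip_def by (rule sA_S2[OF block_cyl_depends_below]) (auto intro: block_cyl_ignores)

lemma block_flip_involution: "block_flip l C m \<circ> block_flip l C m = id"
  unfolding block_flip_def by (rule sA_involution) (auto intro: block_cyl_ignores)

lemma block_flip_commute:
  assumes g: "g \<in> S2 n" and "n \<le> m"
  shows "block_flip l C m \<circ> g = g \<circ> block_flip l C m"
proof
  fix x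
  have e: "map (g x) [m..<m + l] = map x [m..<m + l]"
    using \<open>n \<le> m\<close> by (auto simp: S2_fixes_high[OF g])
  have mem: "g x \<in> block_cyl m (m + l) C \<longleftrightarrow> x \<in> block_cyl m (m + l) C"
    unfolding block_cyl_def mem_Collect_eq e ..
  show "(block_flip l C m \<circ> g) x = (g \<circ> block_flip l C m) x"
  proof (cases "x \<in> block_cyl m (m + l) C")
    case False
    have "g (x(m + l := \<not> x (m + l))) = (g x)(m + l := \<not> x (m + l))"
      using \<open>n \<le> m\<close> by (intro S2_fun_upd_high[OF g]) simp
    moreover have "g x (m + l) = x (m + l)" using \<open>n \<le> m\<close> by (intro S2_fixes_high[OF g]) simp
    ultimately show ?thesis using False mem by (simp add: block_flip_def sA_def)
  qed (use mem in \<open>simp add: block_flip_def sA_def\<close>)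
qed

lemma coord_perm_swap_blocks_commute:
  assumes g: "g \<in> S2 n" and "n \<le> m" and "m + L \<le> m'"
  shows "coord_perm (swap_blocks L m m') \<circ> g = g \<circ> coord_perm (swap_blocks L m m')"
proof (intro ext)
  fix x i
  let ?\<sigma> = "swap_blocks L m m'"
  show "(coord_perm ?\<sigma> \<circ> g) x i = (g \<circ> coord_perm ?\<sigma>) x i"
  proof (cases "i < n")
    case True
    have low: "\<forall>j<n. ?\<sigma> j = j" using assms(2,3) by (auto simp: swap_blocks_def)
    then have "g (x \<circ> ?\<sigma>) i = g x i" using True by (intro S2_agree_below[OF g]) simp
    with low True show ?thesis by (simp add: coord_perm_def)
  next
    case False
    then have "n \<le> ?\<sigma> i" using assms(2,3) by (auto simp: swap_blocks_def)
    with False show ?thesis by (simp add: coord_perm_def S2_fixes_high[OF g])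
  qed
qed

lemma block_flip_conj:
  assumes "m + Suc l \<le> m'"
  shows "coord_perm (swap_blocks (Suc l) m m') \<circ> block_flip l C m \<circ> coord_perm (swap_blocks (Suc l) m m')
    = block_flip l C m'"
proof
  fix x :: point
  let ?\<sigma> = "swap_blocks (Suc l) m m'"
  let ?y = "x \<circ> ?\<sigma>"
  have \<sigma>_block: "?\<sigma> (m + t) = m' + t" if "t \<le> l" for t
    using that assms by (simp add: swap_blocks_def)
  have y: "?y (m + t) = x (m' + t)" if "t \<le> l" for t
    using \<sigma>_block[OF that] by simp
  have e: "map ?y [m..<m + l] = map x [m'..<m' + l]"
    by (rule nth_equalityI) (simp_all add: \<sigma>_block)
  have mem: "?y \<in> block_cyl m (m + l) C \<longleftrightarrow> x \<in> block_cyl m' (m' + l) C"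
    unfolding block_cyl_def mem_Collect_eq e ..
  have \<sigma>\<sigma>: "?\<sigma> (?\<sigma> i) = i" for i using fun_cong[OF swap_blocks_involution[OF assms]] by simp
  show "(coord_perm ?\<sigma> \<circ> block_flip l C m \<circ> coord_perm ?\<sigma>) x = block_flip l C m' x"
  proof (cases "x \<in> block_cyl m' (m' + l) C")
    case True
    with mem \<sigma>\<sigma> show ?thesis by (simp add: block_flip_def sA_def coord_perm_def comp_def)
  next
    case False
    have "(?y(m + l := \<not> ?y (m + l))) \<circ> ?\<sigma> = x(m' + l := \<not> x (m' + l))"
    proof
      fix i
      have "?\<sigma> i = m + l \<longleftrightarrow> i = m' + l" using assms by (auto simp: swap_blocks_def)
      with \<sigma>\<sigma>[of i] y[of l] show "((?y(m + l := \<not> ?y (m + l))) \<circ> ?\<sigma>) i = (x(m' + l := \<not> x (m' + l))) i"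
        by auto
    qed
    with False mem show ?thesis by (simp add: block_flip_def sA_def coord_perm_def)
  qed
qed

lemma (in character) chi_comp_block_flip_indep:
  assumes g: "g \<in> S2 n" and "n \<le> m" "n \<le> m'"
  shows "chi (g \<circ> block_flip l C m) = chi (g \<circ> block_flip l C m')"
proof -
  \<comment> \<open>conjugate both sides to a block beyond \<open>m\<close> and \<open>m'\<close> by swapping blocks of coordinates\<close>
  have step: "chi (g \<circ> block_flip l C m) = chi (g \<circ> block_flip l C m'')"
    if "n \<le> m" "m + Suc l \<le> m''" for m m''
  proof -
    let ?P = "coord_perm (swap_blocks (Suc l) m m'')"
    let ?N = "m'' + Suc l"
    have P: "?P \<in> S2 ?N"
      using that by (intro coord_perm_S2 swap_blocks_involution) (auto simp: swap_blocks_def)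
    have PP: "?P \<circ> ?P = id" by (rule coord_perm_involution[OF swap_blocks_involution[OF that(2)]])
    have gT: "g \<circ> block_flip l C m \<in> S2 ?N"
      using that by (intro comp_S2 S2_mono[OF g] S2_mono[OF block_flip_S2]) auto
    have "?P \<circ> (g \<circ> block_flip l C m) \<circ> ?P = (?P \<circ> g) \<circ> (block_flip l C m \<circ> ?P)"
      by (simp add: comp_assoc)
    also have "\<dots> = g \<circ> (?P \<circ> block_flip l C m \<circ> ?P)"
      using coord_perm_swap_blocks_commute[OF g that] by (simp add: comp_assoc)
    also have "\<dots> = g \<circ> block_flip l C m''" using block_flip_conj[OF that(2)] by simp
    finally show ?thesis using conj_invariant[OF P P gT PP] by simp
  qed
  from step[of m "m + m' + Suc l"] step[of m' "m + m' + Suc l"] assms(2,3) show ?thesis by simp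
qed

lemma cyl_Int_block_cyl:
  assumes Ca: "Ca \<subseteq> Xn k" and Cb: "Cb \<subseteq> Xn l"
  obtains E where "E \<subseteq> Xn (Suc k + l)" "card E = card Ca * card Cb * 2"
    "cyl k Ca \<inter> block_cyl (Suc k) (Suc k + l) Cb = cyl (Suc k + l) E"
proof
  \<comment> \<open>\<open>E = Ca \<times> {0,1} \<times> Cb\<close> as lists of length \<open>k + 1 + l\<close>\<close>
  define P where "P = {us. length us = k + 1 \<and> take k us \<in> Ca \<and> drop k us \<in> Xn 1}"
  define E where "E = {xs. length xs = (k + 1) + l \<and> take (k + 1) xs \<in> P \<and> drop (k + 1) xs \<in> Cb}"
  have PX: "P \<subseteq> Xn (k + 1)" by (auto simp: P_def Xn_def)
  show "E \<subseteq> Xn (Suc k + l)" by (auto simp: E_def Xn_def)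
  have "card P = card Ca * 2"
    unfolding P_def using card_append_set[OF Ca, of "Xn 1" 1] card_Xn[of 1] by simp
  then show "card E = card Ca * card Cb * 2"
    unfolding E_def using card_append_set[OF PX Cb] by simp
  show "cyl k Ca \<inter> block_cyl (Suc k) (Suc k + l) Cb = cyl (Suc k + l) E"
  proof (rule set_eqI)
    fix x :: point
    have t1: "take (k + 1) (map x [0..<Suc k + l]) = map x [0..<Suc k]"
      unfolding take_map by (subst take_upt) simp_all
    have t2: "drop (k + 1) (map x [0..<Suc k + l]) = map x [Suc k..<Suc k + l]"
      by (simp add: drop_map)
    have t3: "take k (map x [0..<Suc k]) = map x [0..<k]"
      unfolding take_map by (subst take_upt) simp_all
    have t4: "drop k (map x [0..<Suc k]) \<in> Xn 1" by (simp add: Xn_def)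
    show "x \<in> cyl k Ca \<inter> block_cyl (Suc k) (Suc k + l) Cb \<longleftrightarrow> x \<in> cyl (Suc k + l) E"
      unfolding cyl_def block_cyl_def E_def P_def mem_Collect_eq Int_iff
      using t1 t2 t3 t4 by simp
  qed
qed

locale indecomposable =
  fixes chi :: "(point \<Rightarrow> point) \<Rightarrow> complex"
  assumes indecomposable: "indecomposable_character chi"

sublocale indecomposable \<subseteq> character
  using indecomposable by unfold_locales (simp add: indecomposable_character_def)

context indecomposable
begin

lemma chi_comp_block_flip:
  assumes "g \<in> S2 n" "n \<le> m"
  shows "chi (g \<circ> block_flip l C m) = chi (block_flip l C 0) * chi g"
proof -
  interpret asymptotically_central_involution chi "block_flip l C" "Suc l"
  proof unfold_locales
    show "block_flip l C m \<in> S2 (m + Suc l)" for m by (rule block_flip_S2)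
  qed (auto intro: block_flip_involution block_flip_commute chi_comp_block_flip_indep)
  show ?thesis by (rule chi_comp_T[OF indecomposable assms])
qed

lemma flip_value_mult:
  assumes a: "a \<le> 2 ^ k" and b: "b \<le> 2 ^ l"
  shows "flip_value (k + l) (a * b) = flip_value k a * flip_value l b"
proof -
  obtain Ca where Ca: "Ca \<subseteq> Xn k" "card Ca = a" using obtain_subset_Xn_with_card[OF a] .
  obtain Cb where Cb: "Cb \<subseteq> Xn l" "card Cb = b" using obtain_subset_Xn_with_card[OF b] .
  define A where "A = cyl k Ca"
  define B where "B = block_cyl (Suc k) (Suc k + l) Cb"
  define N where "N = Suc (Suc k + l)"
  obtain E where E: "E \<subseteq> Xn (Suc k + l)" "card E = a * b * 2" and AB: "A \<inter> B = cyl (Suc k + l) E"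
    using cyl_Int_block_cyl[OF Ca(1) Cb(1)] Ca(2) Cb(2) unfolding A_def B_def by metis
  have dA: "depends_below N A" unfolding A_def N_def by (rule cyl_depends_below) simp
  have dB: "depends_below N B" unfolding B_def N_def by (rule block_cyl_depends_below) simp
  have iA: "ignores {k, Suc k + l} A" unfolding A_def by (rule cyl_ignores) simp
  have iB: "ignores {k, Suc k + l} B" unfolding B_def by (rule block_cyl_ignores) simp
  have "complex_of_real (flip_value (k + l) (a * b)) = chi (sA (A \<inter> B) (Suc k + l))"
    using flip_value_lift[of "a * b" "k + l" 1] chi_sA_cyl[OF E(1) order.refl] E(2) a b
    by (simp add: AB mult_le_mono power_add)
  also have "\<dots> = chi (sA A k \<circ> sA B (Suc k + l))"
    using chi_sA_swap_coord[OF depends_below_Int[OF dA dB] _ _ ignores_Int[OF iA iB]]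
      chi_sA_comp_sA[OF _ dA dB _ _ iA iB] by (simp add: N_def)
  also have "sA B (Suc k + l) = block_flip l Cb (Suc k)" by (simp add: block_flip_def B_def)
  also have "chi (sA A k \<circ> block_flip l Cb (Suc k)) = chi (block_flip l Cb 0) * chi (sA A k)"
    unfolding A_def by (rule chi_comp_block_flip[OF sA_cyl_S2[of k k "Suc k"]]) simp_all
  also have "\<dots> = complex_of_real (flip_value l b) * complex_of_real (flip_value k a)"
    using chi_sA_cyl[OF Cb(1) order.refl] chi_sA_cyl[OF Ca(1) order.refl] Ca(2) Cb(2)
    by (simp add: A_def block_flip_def cyl_eq_block_cyl)
  finally show ?thesis by (simp only: of_real_mult[symmetric] of_real_eq_iff mult.commute)
qed

end

section \<open>Classification of the flip values\<close>

lemma eq_if_powers_comparable: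
  fixes g Q c :: real
  assumes "0 < c" "0 < Q" "0 \<le> g"
    and comparable: "\<And>n. \<exists>t. c * t \<le> g ^ n \<and> g ^ n \<le> t \<and> c * t \<le> Q ^ n \<and> Q ^ n \<le> t"
  shows "g = Q"
proof -
  define r where "r = g / Q"
  have r_pow: "c \<le> r ^ n \<and> r ^ n \<le> 1 / c" for n
  proof -
    obtain t where t: "c * t \<le> g ^ n" "g ^ n \<le> t" "c * t \<le> Q ^ n" "Q ^ n \<le> t"
      using comparable by blast
    have Qn: "0 < Q ^ n" using \<open>0 < Q\<close> by simp
    have "r ^ n = g ^ n / Q ^ n" by (simp add: r_def power_divide)
    with t Qn \<open>0 < c\<close> show ?thesis
      by (auto simp: field_simps intro: order_trans[of _ "c * t"] order_trans[of _ t])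
  qed
  have "r = 1"
  proof (rule ccontr)
    assume "r \<noteq> 1"
    then consider "1 < r" | "r < 1" by linarith
    then show False
    proof cases
      case 1
      then obtain n where "1 / c < r ^ n" using real_arch_pow by blast
      with r_pow[of n] show False by simp
    next
      case 2
      then obtain n where "r ^ n < c" using real_arch_pow_inv[OF \<open>0 < c\<close>] by blast
      with r_pow[of n] show False by simp
    qed
  qed
  with \<open>0 < Q\<close> show ?thesis by (simp add: r_def)
qed

lemma dyadic_powr:
  fixes c :: real
  assumes "0 < c" "j \<le> M"
  shows "(2 ^ j / 2 ^ M) powr (- log 2 c) = c ^ (M - j)"
proof -
  have "(2 ^ j / 2 ^ M :: real) = 2 powr (real j - real M)"
    by (simp add: powr_diff powr_realpow)
  then have "(2 ^ j / 2 ^ M) powr (- log 2 c) = (2 powr log 2 c) powr real (M - j)"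
    using assms(2) by (simp add: powr_powr of_nat_diff algebra_simps)
  also have "\<dots> = c ^ (M - j)" using assms(1) by (simp add: powr_realpow)
  finally show ?thesis .
qed

lemma obtain_dyadic_bracket:
  fixes N :: nat
  assumes "1 \<le> N" "N \<le> 2 ^ M"
  obtains e where "e \<le> M" "2 ^ (e - 1) \<le> N" "N \<le> 2 ^ e"
proof
  define e where "e = (LEAST e. N \<le> 2 ^ e)"
  show "N \<le> 2 ^ e" unfolding e_def by (rule LeastI[of _ M]) fact
  show "e \<le> M" unfolding e_def by (rule Least_le) fact
  show "2 ^ (e - 1) \<le> N"
  proof (cases "e = 0")
    case False
    then have "\<not> N \<le> 2 ^ (e - 1)" unfolding e_def by (intro not_less_Least) (simp add: e_def[symmetric])
    then show ?thesis by simp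
  qed (use assms(1) in simp)
qed

context indecomposable
begin

lemma flip_value_zero: "flip_value K 0 = flip_value 0 0"
  using flip_value_lift[of 0 0 K] by simp

lemma flip_value_0_0: "flip_value 0 0 = 0 \<or> flip_value 0 0 = 1"
  using flip_value_mult[of 0 0 0 0] by (simp add: algebra_simps)

lemma flip_value_nonneg:
  assumes "a \<le> 2 ^ K"
  shows "0 \<le> flip_value K a"
proof -
  have "0 \<le> flip_value K 0"
    using flip_value_0_0 by (simp add: flip_value_zero[of K]) linarith
  also have "\<dots> \<le> flip_value K a" by (rule flip_value_mono) (simp_all add: assms)
  finally show ?thesis .
qed

lemma flip_value_le_1: "a \<le> 2 ^ K \<Longrightarrow> flip_value K a \<le> 1"
  using flip_value_abs_le_1 by (simp add: abs_le_iff)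

lemma flip_value_power: "a \<le> 2 ^ K \<Longrightarrow> flip_value (n * K) (a ^ n) = flip_value K a ^ n"
proof (induction n)
  case 0
  then show ?case using flip_value_full[of 0] by simp
next
  case (Suc n)
  have "a ^ n \<le> 2 ^ (n * K)"
    using power_mono[OF Suc.prems, of n] by (simp add: power_mult mult.commute)
  with flip_value_mult[OF Suc.prems this] Suc show ?case by simp
qed

lemma flip_value_two_power: "e \<le> M \<Longrightarrow> flip_value M (2 ^ e) = flip_value 1 1 ^ (M - e)"
  using flip_value_lift[of 1 "M - e" e] flip_value_power[of 1 1 "M - e"] by simp

lemma flip_value_0_0_le: "flip_value 0 0 \<le> flip_value 1 1"
  using flip_value_mono[of 0 1 1] flip_value_zero[of 1] by simp

lemma flip_value_eq_epow_0:
  assumes "flip_value 1 1 = 1" "a \<le> 2 ^ K"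
  shows "flip_value K a = epow (a / 2 ^ K) 0"
proof -
  have "flip_value 0 0 = 1"
    using flip_value_1_bound flip_value_0_0 flip_value_zero[of 1] assms(1) by linarith
  then have "1 \<le> flip_value K a"
    using flip_value_mono[of 0 a K] assms(2) flip_value_zero[of K] by simp
  with flip_value_le_1[OF assms(2)] show ?thesis by (simp add: epow_def)
qed

lemma flip_value_eq_epow_top:
  assumes c: "flip_value 1 1 = 0" and a: "a \<le> 2 ^ K"
  shows "flip_value K a = epow (a / 2 ^ K) \<top>"
proof -
  consider "a = 0" | "a = 2 ^ K" | "1 \<le> a" "a < 2 ^ K" using a by linarith
  then show ?thesis
  proof cases
    case 1
    then have "flip_value K a = 0"
      using flip_value_zero[of K] flip_value_0_0 flip_value_0_0_le c by auto
    with 1 show ?thesis by (simp add: epow_def)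
  next
    case 2
    then show ?thesis by (simp add: flip_value_full epow_def)
  next
    case 3
    then have "real a / 2 ^ K < 1" by (simp add: field_simps)
    from real_arch_pow_inv[OF _ this, of "1 / 2"]
    obtain n where "(real a / 2 ^ K) ^ n < 1 / 2" by auto
    then have "real (2 * a ^ n) < 2 ^ (n * K)"
      by (simp add: power_divide power_mult field_simps mult.commute)
    then have lt: "2 * a ^ n < 2 ^ (n * K)"
      by (metis of_nat_less_iff of_nat_numeral of_nat_power)
    moreover have "1 \<le> a ^ n" using 3 by simp
    ultimately have "(2::nat) ^ 1 < 2 ^ (n * K)" by simp
    then have nK: "1 \<le> n * K" by (simp only: power_strict_increasing_iff)
    then have "(2::nat) ^ (n * K) = 2 * 2 ^ (n * K - 1)" by (simp add: power_eq_if)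
    with lt have "a ^ n \<le> 2 ^ (n * K - 1)" by simp
    then have "flip_value K a ^ n \<le> flip_value (n * K) (2 ^ (n * K - 1))"
      using flip_value_mono[of "a ^ n" "2 ^ (n * K - 1)" "n * K"] flip_value_power[OF a, of n] by simp
    also have "\<dots> = 0"
      using flip_value_two_power[of "n * K - 1" "n * K"] nK c by simp
    finally have "flip_value K a ^ n = 0"
      using zero_le_power[OF flip_value_nonneg[OF a], of n] by simp
    then have "flip_value K a = 0" by simp
    moreover have "real a / 2 ^ K \<noteq> 1" using \<open>real a / 2 ^ K < 1\<close> by simp
    ultimately show ?thesis by (simp add: epow_def)
  qed
qed

lemma flip_value_powers_comparable:
  assumes c: "0 < flip_value 1 1" "flip_value 1 1 < 1" and a: "1 \<le> a" "a \<le> 2 ^ K"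
  defines "Q \<equiv> (a / 2 ^ K) powr (- log 2 (flip_value 1 1))"
  shows "\<exists>t. flip_value 1 1 * t \<le> flip_value K a ^ n \<and> flip_value K a ^ n \<le> t
    \<and> flip_value 1 1 * t \<le> Q ^ n \<and> Q ^ n \<le> t"
proof -
  define c where "c = flip_value 1 1"
  define \<beta> where "\<beta> = - log 2 c"
  have "0 < c" "c < 1" using c by (simp_all add: c_def)
  then have "0 < \<beta>" by (simp add: \<beta>_def)
  define M where "M = n * K"
  define N where "N = a ^ n"
  have "1 \<le> N" using a(1) by (simp add: N_def)
  have "N \<le> 2 ^ M"
    using power_mono[OF a(2), of n] by (simp add: N_def M_def power_mult mult.commute)
  with \<open>1 \<le> N\<close> obtain e where e: "e \<le> M" "2 ^ (e - 1) \<le> N" "N \<le> 2 ^ e"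
    by (rule obtain_dyadic_bracket)
  \<comment> \<open>both \<open>flip_value K a ^ n\<close> and \<open>Q ^ n\<close> lie between \<open>c ^ (M - (e - 1))\<close> and \<open>c ^ (M - e)\<close>\<close>
  have "flip_value K a ^ n = flip_value M N"
    by (simp add: flip_value_power[OF a(2)] M_def N_def)
  moreover have "flip_value M (2 ^ (e - 1)) \<le> flip_value M N" "flip_value M N \<le> flip_value M (2 ^ e)"
    using e \<open>N \<le> 2 ^ M\<close> by (simp_all add: flip_value_mono)
  moreover have "flip_value M (2 ^ (e - 1)) = c ^ (M - (e - 1))" "flip_value M (2 ^ e) = c ^ (M - e)"
    unfolding c_def using e(1) by (simp_all add: flip_value_two_power)
  moreover have "Q ^ n = (real N / 2 ^ M) powr \<beta>"
  proof -
    have "Q ^ n = (real a / 2 ^ K) powr (real n * \<beta>)"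
      using a(1) by (simp add: Q_def powr_power \<beta>_def c_def)
    also have "\<dots> = ((real a / 2 ^ K) ^ n) powr \<beta>"
      using a(1) by (simp add: powr_powr[symmetric] powr_realpow)
    finally show ?thesis by (simp add: N_def M_def power_divide power_mult mult.commute)
  qed
  moreover have "(2 ^ (e - 1) / 2 ^ M) powr \<beta> \<le> (real N / 2 ^ M) powr \<beta>"
    "(real N / 2 ^ M) powr \<beta> \<le> (2 ^ e / 2 ^ M) powr \<beta>"
    using e \<open>0 < \<beta>\<close> by (auto intro!: powr_mono2 divide_right_mono simp flip: of_nat_le_iff)
  moreover have "(2 ^ (e - 1) / 2 ^ M) powr \<beta> = c ^ (M - (e - 1))"
    "(2 ^ e / 2 ^ M) powr \<beta> = c ^ (M - e)"
    unfolding \<beta>_def using e(1) by (simp_all add: dyadic_powr[OF \<open>0 < c\<close>])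
  moreover have "c * c ^ (M - e) \<le> c ^ (M - (e - 1))"
    using \<open>0 < c\<close> \<open>c < 1\<close> power_decreasing[of "M - (e - 1)" "Suc (M - e)" c] by simp
  ultimately have "c * c ^ (M - e) \<le> flip_value K a ^ n" "flip_value K a ^ n \<le> c ^ (M - e)"
    "c * c ^ (M - e) \<le> Q ^ n" "Q ^ n \<le> c ^ (M - e)"
    by simp_all
  then show ?thesis unfolding c_def by blast
qed

lemma flip_value_eq_powr:
  assumes c: "0 < flip_value 1 1" "flip_value 1 1 < 1" and a: "a \<le> 2 ^ K"
  shows "flip_value K a = epow (a / 2 ^ K) (ennreal (- log 2 (flip_value 1 1)))"
proof -
  define \<beta> where "\<beta> = - log 2 (flip_value 1 1)"
  have "0 < \<beta>" using c by (simp add: \<beta>_def)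
  then have epow: "epow x (ennreal \<beta>) = x powr \<beta>" for x by (simp add: epow_def)
  have "flip_value K a = (a / 2 ^ K) powr \<beta>"
  proof (cases "a = 0")
    case True
    have "flip_value 0 0 = 0" using flip_value_0_0 flip_value_0_0_le c(2) by linarith
    with True flip_value_zero[of K] show ?thesis by simp
  next
    case False
    then have "1 \<le> a" by simp
    show ?thesis unfolding \<beta>_def
      by (rule eq_if_powers_comparable[OF _ _ _ flip_value_powers_comparable[OF c \<open>1 \<le> a\<close> a]])
        (use c False flip_value_nonneg[OF a] in simp_all)
  qed
  then show ?thesis by (simp only: epow flip: \<beta>_def)
qed

lemma flip_value_epow: "\<exists>\<alpha>. \<forall>K a. a \<le> 2 ^ K \<longrightarrow> flip_value K a = epow (a / 2 ^ K) \<alpha>"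
proof -
  have "0 \<le> flip_value 1 1" "flip_value 1 1 \<le> 1"
    using flip_value_nonneg[of 1 1] flip_value_le_1[of 1 1] by simp_all
  then consider "flip_value 1 1 = 1" | "flip_value 1 1 = 0" | "0 < flip_value 1 1" "flip_value 1 1 < 1"
    by linarith
  then show ?thesis
  proof cases
    case 1
    then show ?thesis using flip_value_eq_epow_0 by blast
  next
    case 2
    then show ?thesis using flip_value_eq_epow_top by blast
  next
    case 3
    then show ?thesis using flip_value_eq_powr by blast
  qed
qed

end

theorem mainTheorem5:
  fixes chi :: "(point \<Rightarrow> point) \<Rightarrow> complex"
  assumes "indecomposable_character chi"
  shows "\<exists>\<alpha>::ennreal. \<forall>A. nice A \<longrightarrow>
           (\<lambda>m. chi (sA A m)) \<longlonglongrightarrow> complex_of_real (epow (measure mu A) \<alpha>)"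
proof -
  interpret indecomposable chi by standard fact
  obtain \<alpha> where \<alpha>: "\<forall>K a. a \<le> 2 ^ K \<longrightarrow> flip_value K a = epow (a / 2 ^ K) \<alpha>"
    using flip_value_epow by blast
  have "(\<lambda>m. chi (sA A m)) \<longlonglongrightarrow> complex_of_real (epow (measure mu A) \<alpha>)" if "nice A" for A
  proof -
    from that obtain k C where C: "C \<subseteq> Xn k" and A: "A = cyl k C"
      by (auto simp: nice_def cyl_def)
    have "chi (sA A m) = complex_of_real (epow (measure mu A) \<alpha>)" if "k \<le> m" for m
      using chi_sA_cyl[OF C that] \<alpha> card_le_card_Xn[OF C] by (simp add: A measure_mu_cyl[OF C])
    then show ?thesis
      by (intro tendsto_eventually eventually_sequentiallyI)
  qed
  then show ?thesis by blast
qed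

end
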